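(* Assume $\overline{\mathcal{G}}$ is compact with totally disconnected boundary $\partial\overline{\mathcal{G}}$. Then: - $\mathcal{A}$ is uniformly dense in the space of continuous real-valued functions on $\overline{\mathcal{G}}$; - the set of restrictions to $\partial\overline{\mathcal{G}}$ of functions in $\mathcal{A}$ is uniformly dense in the space of continuous real-valued functions on $\partial\overline{\mathcal{G}}$.
   Context: $\mathcal{G}$ is a connected, locally finite metric graph with countable vertex set and countable edge set. Each edge has a positive length and is identified with an interval. $\mathcal{G}$ carries the geodesic distance, and $\overline{\mathcal{G}}$ is its metric completion. A designated set of vertices, containing all vertices of degree $1$, forms the boundary vertices. $\mathcal{G}_{int}$ is $\mathcal{G}$ minus the boundary vertices, and $\partial\overline{\mathcal{G}}=\overline{\mathcal{G}}\setminus\mathcal{G}_{int}$. $\mathcal{A}$ is the set of functions $\phi:\overline{\mathcal{G}}\to\mathbb{R}$ such that: - $\phi$ is continuous on $\overline{\mathcal{G}}$; - $\phi$ is infinitely differentiable on the open edges of $\mathcal{G}$; - $\phi'=0$ in the complement of some finite collection of edges; - $\phi'=0$ in an open neighborhood of each vertex of $\mathcal{G}$. *)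

theory Defs
  imports "HOL-Analysis.Analysis"
begin

text \<open>Combinatorial data of a metric graph: vertex set V, edge set E,
  each edge e has an origin fst (ends e) and terminus snd (ends e) (loops and
  multiple edges allowed) and a length len e > 0; edge e is identified with the
  interval [0, len e], parameter t being the distance from the origin.\<close>

datatype ('v, 'e) gpoint = Vtx 'v | EPt 'e real

definition incident :: "'e set \<Rightarrow> ('e \<Rightarrow> 'v \<times> 'v) \<Rightarrow> 'v \<Rightarrow> 'e set" where
  "incident E ends v = {e \<in> E. fst (ends e) = v \<or> snd (ends e) = v}"

text \<open>Degree (a loop contributes 2).\<close>
definition degree :: "'e set \<Rightarrow> ('e \<Rightarrow> 'v \<times> 'v) \<Rightarrow> 'v \<Rightarrow> nat" where
  "degree E ends v = card {e \<in> E. fst (ends e) = v} + card {e \<in> E. snd (ends e) = v}"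

inductive walk :: "'e set \<Rightarrow> ('e \<Rightarrow> 'v \<times> 'v) \<Rightarrow> ('e \<Rightarrow> real) \<Rightarrow> 'v \<Rightarrow> 'v \<Rightarrow> real \<Rightarrow> bool"
  for E ends len where
  walk_nil: "walk E ends len u u 0"
| walk_fwd: "e \<in> E \<Longrightarrow> ends e = (u, x) \<Longrightarrow> walk E ends len x w L \<Longrightarrow> walk E ends len u w (len e + L)"
| walk_bwd: "e \<in> E \<Longrightarrow> ends e = (x, u) \<Longrightarrow> walk E ends len x w L \<Longrightarrow> walk E ends len u w (len e + L)"

definition metric_graph :: "'v set \<Rightarrow> 'e set \<Rightarrow> ('e \<Rightarrow> 'v \<times> 'v) \<Rightarrow> ('e \<Rightarrow> real) \<Rightarrow> bool" where
  "metric_graph V E ends len \<longleftrightarrow>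
     countable V \<and> countable E \<and>
     (\<forall>e\<in>E. fst (ends e) \<in> V \<and> snd (ends e) \<in> V \<and> len e > 0) \<and>
     (\<forall>v\<in>V. finite (incident E ends v)) \<and>
     (\<forall>u\<in>V. \<forall>w\<in>V. \<exists>L. walk E ends len u w L)"

definition gpoints :: "'v set \<Rightarrow> 'e set \<Rightarrow> ('e \<Rightarrow> real) \<Rightarrow> ('v, 'e) gpoint set" where
  "gpoints V E len = Vtx ` V \<union> {EPt e t |e t. e \<in> E \<and> 0 < t \<and> t < len e}"

definition vdist :: "'e set \<Rightarrow> ('e \<Rightarrow> 'v \<times> 'v) \<Rightarrow> ('e \<Rightarrow> real) \<Rightarrow> 'v \<Rightarrow> 'v \<Rightarrow> real" where
  "vdist E ends len u w = Inf {L. walk E ends len u w L}"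

fun gdist :: "'e set \<Rightarrow> ('e \<Rightarrow> 'v \<times> 'v) \<Rightarrow> ('e \<Rightarrow> real) \<Rightarrow> ('v, 'e) gpoint \<Rightarrow> ('v, 'e) gpoint \<Rightarrow> real" where
  "gdist E ends len (Vtx u) (Vtx w) = vdist E ends len u w"
| "gdist E ends len (Vtx u) (EPt f t) =
     min (vdist E ends len u (fst (ends f)) + t) (vdist E ends len u (snd (ends f)) + (len f - t))"
| "gdist E ends len (EPt e s) (Vtx w) =
     min (s + vdist E ends len (fst (ends e)) w) ((len e - s) + vdist E ends len (snd (ends e)) w)"
| "gdist E ends len (EPt e s) (EPt f t) =
     Min ({s + vdist E ends len (fst (ends e)) (fst (ends f)) + t,
           s + vdist E ends len (fst (ends e)) (snd (ends f)) + (len f - t),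
           (len e - s) + vdist E ends len (snd (ends e)) (fst (ends f)) + t,
           (len e - s) + vdist E ends len (snd (ends e)) (snd (ends f)) + (len f - t)}
          \<union> (if e = f then {\<bar>s - t\<bar>} else {}))"

text \<open>iota is an isometric embedding of the metric graph onto a dense subset of the
  complete metric space Gbar, i.e. Gbar (with iota) is the metric completion.\<close>
definition is_completion ::
  "'v set \<Rightarrow> 'e set \<Rightarrow> ('e \<Rightarrow> 'v \<times> 'v) \<Rightarrow> ('e \<Rightarrow> real) \<Rightarrow> (('v, 'e) gpoint \<Rightarrow> 'p::metric_space) \<Rightarrow> 'p set \<Rightarrow> bool" where
  "is_completion V E ends len iota Gbar \<longleftrightarrow>
     (\<forall>x\<in>gpoints V E len. \<forall>y\<in>gpoints V E len. dist (iota x) (iota y) = gdist E ends len x y) \<and>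
     complete Gbar \<and> Gbar = closure (iota ` gpoints V E len)"

definition Gint where
  "Gint V E len B iota = iota ` (gpoints V E len - Vtx ` B)"

definition gboundary where
  "gboundary V E len B iota Gbar = Gbar - Gint V E len B iota"

definition totally_disconnected :: "'a::topological_space set \<Rightarrow> bool" where
  "totally_disconnected S \<longleftrightarrow> (\<forall>x\<in>S. connected_component_set S x = {x})"

definition smooth_on :: "(real \<Rightarrow> real) \<Rightarrow> real set \<Rightarrow> bool" where
  "smooth_on f S \<longleftrightarrow> (\<forall>n. \<forall>t\<in>S. ((deriv ^^ n) f) differentiable (at t))"

definition edge_fun where
  "edge_fun iota phi e = (\<lambda>t. phi (iota (EPt e t)))"

definition algebraA ::
  "'v set \<Rightarrow> 'e set \<Rightarrow> ('e \<Rightarrow> 'v \<times> 'v) \<Rightarrow> ('e \<Rightarrow> real) \<Rightarrow> (('v, 'e) gpoint \<Rightarrow> 'p::metric_space) \<Rightarrow> 'p set \<Rightarrow> ('p \<Rightarrow> real) set" where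
  "algebraA V E ends len iota Gbar =
    {phi. continuous_on Gbar phi \<and>
       (\<forall>e\<in>E. smooth_on (edge_fun iota phi e) {0<..<len e}) \<and>
       (\<exists>F. finite F \<and> F \<subseteq> E \<and>
          (\<forall>e\<in>E - F. \<forall>t\<in>{0<..<len e}. deriv (edge_fun iota phi e) t = 0)) \<and>
       (\<forall>v\<in>V. \<exists>r>0. \<forall>e\<in>E. \<forall>t\<in>{0<..<len e}.
          gdist E ends len (Vtx v) (EPt e t) < r \<longrightarrow> deriv (edge_fun iota phi e) t = 0)}"

end

theory Submission
  imports Defs "HOL-Computational_Algebra.Polynomial"
begin

text \<open>By Stone--Weierstrass it suffices that \<open>algebraA\<close> is a subalgebra of \<open>C(Gbar)\<close> containing
  the constants and separating points; density on the boundary then follows by extending a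
  continuous function from the closed boundary to \<open>Gbar\<close> (Tietze).  Closure under sums and
  products is the Leibniz rule.  Separation uses functions that are smooth along the edges and
  locally constant near the vertices: an interior edge point is separated by a bump supported on
  its edge.  The remaining points, vertices and ideal boundary points, form the compact set
  \<open>nodes\<close>, which is totally disconnected because vertices are isolated in it and the rest lies in
  the totally disconnected boundary.  Hence two nodes are split by a partition of \<open>nodes\<close> into
  closed sets; the indicator of one part extends into \<open>algebraA\<close> because, by compactness, only
  finitely many edges are long enough to join the two parts, and on those a smooth step does
  the interpolation.\<close>

section \<open>Smooth functions of one real variable\<close>

definition Cn_on :: "nat \<Rightarrow> (real \<Rightarrow> real) \<Rightarrow> real set \<Rightarrow> bool" where
  "Cn_on n f S \<longleftrightarrow> (\<forall>k\<le>n. \<forall>x\<in>S. (deriv ^^ k) f differentiable (at x))"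

lemma smooth_on_iff_Cn_on: "smooth_on f S \<longleftrightarrow> (\<forall>n. Cn_on n f S)"
  unfolding smooth_on_def Cn_on_def by blast

lemma Cn_on_0: "Cn_on 0 f S \<longleftrightarrow> (\<forall>x\<in>S. f differentiable (at x))"
  by (simp add: Cn_on_def)

lemma Cn_on_Suc:
  "Cn_on (Suc n) f S \<longleftrightarrow> (\<forall>x\<in>S. f differentiable (at x)) \<and> Cn_on n (deriv f) S"
proof -
  have "(\<forall>k\<le>Suc n. P k) \<longleftrightarrow> P 0 \<and> (\<forall>k\<le>n. P (Suc k))" for P
    by (metis Suc_le_mono le0 not0_implies_Suc)
  then show ?thesis
    unfolding Cn_on_def by (simp add: funpow_Suc_right del: funpow.simps)
qed

lemma Cn_on_Suc_imp_Cn_on: "Cn_on (Suc n) f S \<Longrightarrow> Cn_on n f S"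
  by (simp add: Cn_on_def)

lemma smooth_on_imp_differentiable: "smooth_on f S \<Longrightarrow> x \<in> S \<Longrightarrow> f differentiable (at x)"
  by (metis funpow_0 smooth_on_def)

lemma smooth_on_subset: "smooth_on f T \<Longrightarrow> S \<subseteq> T \<Longrightarrow> smooth_on f S"
  unfolding smooth_on_def by blast

lemma higher_deriv_cong_on:
  assumes "open S" "\<And>x. x \<in> S \<Longrightarrow> f x = g x" "x \<in> S"
  shows "(deriv ^^ n) f x = (deriv ^^ n) g x"
  using assms(3)
proof (induction n arbitrary: x)
  case 0
  then show ?case using assms(2) by simp
next
  case (Suc n)
  have "\<forall>\<^sub>F y in nhds x. y \<in> S"
    using assms(1) Suc.prems by (rule eventually_nhds_in_open)
  then have "\<forall>\<^sub>F y in nhds x. (deriv ^^ n) f y = (deriv ^^ n) g y"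
    by (rule eventually_mono) (rule Suc.IH)
  then show ?case by (simp add: deriv_cong_ev)
qed

lemma Cn_on_cong:
  assumes "open S" "\<And>x. x \<in> S \<Longrightarrow> f x = g x" "Cn_on n f S"
  shows "Cn_on n g S"
  unfolding Cn_on_def
proof (intro allI impI ballI)
  fix k x assume "k \<le> n" "x \<in> S"
  then have "DERIV ((deriv ^^ k) f) x :> deriv ((deriv ^^ k) f) x"
    using assms(3) by (simp add: Cn_on_def DERIV_deriv_iff_real_differentiable)
  moreover have "\<And>y. y \<in> S \<Longrightarrow> (deriv ^^ k) f y = (deriv ^^ k) g y"
    using higher_deriv_cong_on[of S f g] assms(1,2) by blast
  ultimately have "DERIV ((deriv ^^ k) g) x :> deriv ((deriv ^^ k) f) x"
    using has_field_derivative_transform_within_open assms(1) \<open>x \<in> S\<close> by blast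
  then show "(deriv ^^ k) g differentiable (at x)"
    using real_differentiable_def by blast
qed

lemma smooth_on_cong: "open S \<Longrightarrow> (\<And>x. x \<in> S \<Longrightarrow> f x = g x) \<Longrightarrow> smooth_on f S \<Longrightarrow> smooth_on g S"
  unfolding smooth_on_iff_Cn_on using Cn_on_cong by blast

lemma deriv_eq_0_if_eventually_const: "\<forall>\<^sub>F y in nhds x. f y = c \<Longrightarrow> deriv f x = 0"
  using deriv_cong_ev[of f "\<lambda>_. c" x x] by simp

lemma Cn_on_const: "Cn_on n (\<lambda>x. c) S"
  by (induction n arbitrary: c) (simp_all add: Cn_on_0 Cn_on_Suc)

lemma Cn_on_add:
  assumes "open S"
  shows "Cn_on n f S \<Longrightarrow> Cn_on n g S \<Longrightarrow> Cn_on n (\<lambda>x. f x + g x) S"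
proof (induction n arbitrary: f g)
  case 0
  then show ?case by (auto simp: Cn_on_0)
next
  case (Suc n)
  then have diff: "\<forall>x\<in>S. f differentiable (at x)" "\<forall>x\<in>S. g differentiable (at x)"
    and IH: "Cn_on n (\<lambda>x. deriv f x + deriv g x) S"
    by (auto simp: Cn_on_Suc intro: Suc.IH)
  have "deriv f x + deriv g x = deriv (\<lambda>x. f x + g x) x" if "x \<in> S" for x
  proof -
    have "DERIV f x :> deriv f x" "DERIV g x :> deriv g x"
      using diff that by (simp_all add: DERIV_deriv_iff_real_differentiable)
    then show ?thesis by (intro DERIV_imp_deriv[symmetric] derivative_intros)
  qed
  then have "Cn_on n (deriv (\<lambda>x. f x + g x)) S"
    using IH by (rule Cn_on_cong[OF assms])
  then show ?case
    using diff by (simp add: Cn_on_Suc)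
qed

lemma Cn_on_mult:
  assumes "open S"
  shows "Cn_on n f S \<Longrightarrow> Cn_on n g S \<Longrightarrow> Cn_on n (\<lambda>x. f x * g x) S"
proof (induction n arbitrary: f g)
  case 0
  then show ?case by (auto simp: Cn_on_0)
next
  case (Suc n)
  then have diff: "\<forall>x\<in>S. f differentiable (at x)" "\<forall>x\<in>S. g differentiable (at x)"
    and "Cn_on n (deriv f) S" "Cn_on n (deriv g) S" "Cn_on n f S" "Cn_on n g S"
    by (auto simp: Cn_on_Suc Cn_on_Suc_imp_Cn_on)
  then have IH: "Cn_on n (\<lambda>x. deriv f x * g x + f x * deriv g x) S"
    using assms by (intro Cn_on_add Suc.IH)
  have "deriv f x * g x + f x * deriv g x = deriv (\<lambda>x. f x * g x) x" if "x \<in> S" for x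
  proof -
    have "DERIV f x :> deriv f x" "DERIV g x :> deriv g x"
      using diff that by (simp_all add: DERIV_deriv_iff_real_differentiable)
    then show ?thesis by (intro DERIV_imp_deriv[symmetric]) (auto intro!: derivative_eq_intros)
  qed
  then have "Cn_on n (deriv (\<lambda>x. f x * g x)) S"
    using IH by (rule Cn_on_cong[OF assms])
  then show ?case
    using diff by (simp add: Cn_on_Suc)
qed

lemma DERIV_inverse_deriv:
  fixes f :: "real \<Rightarrow> real"
  assumes "f differentiable (at x)" "f x \<noteq> 0"
  shows "DERIV (\<lambda>x. inverse (f x)) x :> - (deriv f x * (inverse (f x) * inverse (f x)))"
proof -
  have "DERIV f x :> deriv f x"
    using assms(1) by (simp add: DERIV_deriv_iff_real_differentiable)
  from DERIV_inverse_fun[OF this assms(2)] show ?thesis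
    by (simp add: power2_eq_square inverse_mult_distrib)
qed

lemma Cn_on_inverse:
  assumes "open S"
  shows "Cn_on n f S \<Longrightarrow> (\<And>x. x \<in> S \<Longrightarrow> f x \<noteq> 0) \<Longrightarrow> Cn_on n (\<lambda>x. inverse (f x)) S"
proof (induction n arbitrary: f)
  case 0
  then show ?case
    using DERIV_inverse_deriv real_differentiable_def by (simp add: Cn_on_0) blast
next
  case (Suc n)
  then have diff: "\<forall>x\<in>S. f differentiable (at x)" and "Cn_on n (deriv f) S" "Cn_on n f S"
    by (auto simp: Cn_on_Suc Cn_on_Suc_imp_Cn_on)
  moreover have "Cn_on n (\<lambda>x. inverse (f x)) S"
    using Suc.IH \<open>Cn_on n f S\<close> Suc.prems(2) by blast
  ultimately have "Cn_on n (\<lambda>x. (-1) * (deriv f x * (inverse (f x) * inverse (f x)))) S"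
    by (intro Cn_on_mult[OF assms] Cn_on_const)
  then have IH: "Cn_on n (\<lambda>x. - (deriv f x * (inverse (f x) * inverse (f x)))) S"
    by simp
  have deriv_inverse:
    "DERIV (\<lambda>x. inverse (f x)) x :> - (deriv f x * (inverse (f x) * inverse (f x)))"
    if "x \<in> S" for x
    using diff that Suc.prems(2) by (simp add: DERIV_inverse_deriv)
  have "- (deriv f x * (inverse (f x) * inverse (f x))) = deriv (\<lambda>x. inverse (f x)) x"
    if "x \<in> S" for x
    using deriv_inverse[OF that] by (rule DERIV_imp_deriv[symmetric])
  then have "Cn_on n (deriv (\<lambda>x. inverse (f x))) S"
    using IH by (rule Cn_on_cong[OF assms])
  then show ?case
    using deriv_inverse real_differentiable_def by (auto simp: Cn_on_Suc)
qed

lemma DERIV_affine_compose: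
  fixes f :: "real \<Rightarrow> real"
  assumes "f differentiable (at (a * x + b))"
  shows "DERIV (\<lambda>x. f (a * x + b)) x :> a * deriv f (a * x + b)"
proof -
  have "DERIV f (a * x + b) :> deriv f (a * x + b)"
    using assms by (simp add: DERIV_deriv_iff_real_differentiable)
  moreover have "DERIV (\<lambda>x. a * x + b) x :> a"
    by (auto intro!: derivative_eq_intros)
  ultimately have "DERIV (\<lambda>x. f (a * x + b)) x :> deriv f (a * x + b) * a"
    by (rule DERIV_chain2)
  then show ?thesis
    by (simp add: mult.commute)
qed

lemma Cn_on_affine: "Cn_on n f UNIV \<Longrightarrow> Cn_on n (\<lambda>x. f (a * x + b)) UNIV"
proof (induction n arbitrary: f)
  case 0
  then show ?case
    using DERIV_affine_compose real_differentiable_def by (simp add: Cn_on_0) blast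
next
  case (Suc n)
  then have diff: "\<forall>x. f differentiable (at x)" and "Cn_on n (deriv f) UNIV"
    by (auto simp: Cn_on_Suc)
  then have "Cn_on n (\<lambda>x. a * deriv f (a * x + b)) UNIV"
    by (intro Cn_on_mult Cn_on_const Suc.IH) auto
  moreover have "deriv (\<lambda>x. f (a * x + b)) = (\<lambda>x. a * deriv f (a * x + b))"
    using diff DERIV_affine_compose DERIV_imp_deriv by blast
  ultimately show ?case
    using diff DERIV_affine_compose real_differentiable_def by (simp add: Cn_on_Suc) blast
qed

lemma smooth_on_const: "smooth_on (\<lambda>x. c) S"
  by (simp add: smooth_on_iff_Cn_on Cn_on_const)

lemma smooth_on_add: "open S \<Longrightarrow> smooth_on f S \<Longrightarrow> smooth_on g S \<Longrightarrow> smooth_on (\<lambda>x. f x + g x) S"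
  by (simp add: smooth_on_iff_Cn_on Cn_on_add)

lemma smooth_on_mult: "open S \<Longrightarrow> smooth_on f S \<Longrightarrow> smooth_on g S \<Longrightarrow> smooth_on (\<lambda>x. f x * g x) S"
  by (simp add: smooth_on_iff_Cn_on Cn_on_mult)

lemma smooth_on_inverse:
  "open S \<Longrightarrow> smooth_on f S \<Longrightarrow> (\<And>x. x \<in> S \<Longrightarrow> f x \<noteq> 0) \<Longrightarrow> smooth_on (\<lambda>x. inverse (f x)) S"
  by (simp add: smooth_on_iff_Cn_on Cn_on_inverse)

lemma smooth_on_affine: "smooth_on f UNIV \<Longrightarrow> smooth_on (\<lambda>x. f (a * x + b)) UNIV"
  by (simp add: smooth_on_iff_Cn_on Cn_on_affine)

lemma poly_times_exp_neg_tendsto_0: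
  fixes r :: "real poly"
  shows "((\<lambda>z. poly r z * exp (- z)) \<longlongrightarrow> 0) at_top"
proof -
  have "(\<lambda>z. poly r z * exp (- z)) = (\<lambda>z. \<Sum>i\<le>Polynomial.degree r. coeff r i * (z ^ i / exp z))"
    by (rule ext) (simp add: poly_altdef sum_distrib_right exp_minus divide_inverse mult.assoc)
  moreover have "((\<lambda>z. \<Sum>i\<le>Polynomial.degree r. coeff r i * (z ^ i / exp z)) \<longlongrightarrow> 0) at_top"
    by (intro tendsto_null_sum tendsto_mult_right_zero tendsto_power_div_exp_0)
  ultimately show ?thesis by simp
qed

definition flat_poly :: "real poly \<Rightarrow> real \<Rightarrow> real" where
  "flat_poly p x = (if 0 < x then poly p (inverse x) * exp (- inverse x) else 0)"

definition flat_deriv_poly :: "real poly \<Rightarrow> real poly" where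
  "flat_deriv_poly p = monom 1 2 * (p - pderiv p)"

lemma DERIV_flat_poly_pos:
  assumes "0 < x"
  shows "DERIV (flat_poly p) x :> flat_poly (flat_deriv_poly p) x"
proof -
  have "DERIV (\<lambda>x. poly p (inverse x) * exp (- inverse x)) x :> flat_poly (flat_deriv_poly p) x"
    using assms
    by (auto intro!: derivative_eq_intros DERIV_chain2[OF poly_DERIV]
        simp: flat_poly_def flat_deriv_poly_def poly_monom algebra_simps power2_eq_square)
  moreover have "\<forall>\<^sub>F y in nhds x. flat_poly p y = poly p (inverse y) * exp (- inverse y)"
    using eventually_nhds_in_open[of "{0<..}" x] assms
    by (auto elim!: eventually_mono simp: flat_poly_def)
  ultimately show ?thesis
    by (subst DERIV_cong_ev[OF refl _ refl])
qed

lemma DERIV_flat_poly_neg: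
  assumes "x < 0"
  shows "DERIV (flat_poly p) x :> flat_poly (flat_deriv_poly p) x"
proof -
  have "\<forall>\<^sub>F y in nhds x. flat_poly p y = 0"
    using eventually_nhds_in_open[of "{..<0}" x] assms
    by (auto elim!: eventually_mono simp: flat_poly_def)
  then show ?thesis
    using assms by (subst DERIV_cong_ev[OF refl _ refl]) (auto simp: flat_poly_def)
qed

text \<open>At \<open>0\<close> the right difference quotient is \<open>poly (pCons 0 p) (1/y) * exp (-1/y)\<close>,
  which vanishes in the limit because \<open>exp\<close> beats every polynomial.\<close>

lemma DERIV_flat_poly_0: "DERIV (flat_poly p) 0 :> flat_poly (flat_deriv_poly p) 0"
proof -
  have left: "((\<lambda>y. (flat_poly p y - flat_poly p 0) / (y - 0)) \<longlongrightarrow> 0) (at_left 0)"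
  proof (rule Lim_transform_eventually[OF tendsto_const])
    show "\<forall>\<^sub>F y in at_left 0. 0 = (flat_poly p y - flat_poly p 0) / (y - 0)"
      unfolding eventually_at_left_field by (auto simp: flat_poly_def intro!: exI[of _ "-1"])
  qed
  have "((\<lambda>y. poly (pCons 0 p) (inverse y) * exp (- inverse y)) \<longlongrightarrow> 0) (at_right 0)"
    using filterlim_compose[OF poly_times_exp_neg_tendsto_0[of "pCons 0 p"]
          filterlim_inverse_at_top_right]
    by simp
  then have right: "((\<lambda>y. (flat_poly p y - flat_poly p 0) / (y - 0)) \<longlongrightarrow> 0) (at_right 0)"
  proof (rule Lim_transform_eventually)
    show "\<forall>\<^sub>F y in at_right 0.
        poly (pCons 0 p) (inverse y) * exp (- inverse y) = (flat_poly p y - flat_poly p 0) / (y - 0)"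
      unfolding eventually_at_right_field
      by (auto simp: flat_poly_def divide_inverse intro!: exI[of _ 1])
  qed
  show ?thesis
    unfolding has_field_derivative_iff using filterlim_split_at[OF left right]
    by (simp add: flat_poly_def)
qed

lemma DERIV_flat_poly: "DERIV (flat_poly p) x :> flat_poly (flat_deriv_poly p) x"
  using DERIV_flat_poly_pos DERIV_flat_poly_neg DERIV_flat_poly_0
  by (metis linorder_neqE_linordered_idom)

lemma smooth_on_flat_poly: "smooth_on (flat_poly p) S"
proof -
  have "Cn_on n (flat_poly p) UNIV" for n
  proof (induction n arbitrary: p)
    case 0
    then show ?case
      using DERIV_flat_poly real_differentiable_def by (auto simp: Cn_on_0)
  next
    case (Suc n)
    have "deriv (flat_poly p) = flat_poly (flat_deriv_poly p)"
      using DERIV_flat_poly DERIV_imp_deriv by blast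
    then show ?case
      using Suc DERIV_flat_poly real_differentiable_def by (auto simp: Cn_on_Suc)
  qed
  then show ?thesis
    by (auto simp: smooth_on_iff_Cn_on Cn_on_def)
qed

definition flat :: "real \<Rightarrow> real" where
  "flat x = (if 0 < x then exp (- inverse x) else 0)"

lemma smooth_on_flat: "smooth_on flat S"
proof -
  have "flat = flat_poly 1"
    by (rule ext) (simp add: flat_def flat_poly_def)
  then show ?thesis
    using smooth_on_flat_poly[of 1] by simp
qed

lemma flat_pos: "0 < x \<Longrightarrow> 0 < flat x"
  and flat_eq_0: "x \<le> 0 \<Longrightarrow> flat x = 0"
  and flat_nonneg: "0 \<le> flat x"
  by (auto simp: flat_def)

definition bump :: "real \<Rightarrow> real \<Rightarrow> real \<Rightarrow> real" where
  "bump a b t = flat (t - a) * flat (b - t)"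

definition smooth_step :: "real \<Rightarrow> real \<Rightarrow> real \<Rightarrow> real" where
  "smooth_step a b t = flat (t - a) / (flat (t - a) + flat (b - t))"

lemma smooth_on_flat_affine: "smooth_on (\<lambda>t. flat (c * t + d)) UNIV"
  by (intro smooth_on_affine smooth_on_flat)

lemma smooth_on_bump: "smooth_on (bump a b) S"
proof -
  have "smooth_on (\<lambda>t. flat (1 * t + - a) * flat ((- 1) * t + b)) UNIV"
    by (intro smooth_on_mult smooth_on_flat_affine) auto
  then show ?thesis
    unfolding bump_def by (auto elim: smooth_on_subset)
qed

lemma bump_eq_0: "t \<le> a \<or> b \<le> t \<Longrightarrow> bump a b t = 0"
  by (auto simp: bump_def flat_eq_0)

lemma bump_pos: "a < t \<Longrightarrow> t < b \<Longrightarrow> 0 < bump a b t"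
  by (auto simp: bump_def flat_pos)

lemma smooth_step_denominator_pos: "a < b \<Longrightarrow> 0 < flat (t - a) + flat (b - t)"
  using flat_pos[of "t - a"] flat_pos[of "b - t"] flat_nonneg[of "t - a"] flat_nonneg[of "b - t"]
  by (cases "a < t") auto

lemma smooth_on_smooth_step:
  assumes "a < b"
  shows "smooth_on (smooth_step a b) S"
proof -
  have "smooth_on (\<lambda>t. flat (1 * t + - a) + flat ((- 1) * t + b)) UNIV"
    by (intro smooth_on_add smooth_on_flat_affine) auto
  moreover have "flat (t - a) + flat (b - t) \<noteq> 0" for t
    using smooth_step_denominator_pos[OF assms, of t] by linarith
  ultimately have "smooth_on (\<lambda>t. inverse (flat (t - a) + flat (b - t))) UNIV"
    by (intro smooth_on_inverse) auto
  then have "smooth_on (\<lambda>t. flat (1 * t + - a) * inverse (flat (t - a) + flat (b - t))) UNIV"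
    by (intro smooth_on_mult smooth_on_flat_affine) auto
  then show ?thesis
    unfolding smooth_step_def by (auto simp: divide_inverse elim: smooth_on_subset)
qed

lemma smooth_step_eq_0: "t \<le> a \<Longrightarrow> smooth_step a b t = 0"
  by (simp add: smooth_step_def flat_eq_0)

lemma smooth_step_eq_1: "a < b \<Longrightarrow> b \<le> t \<Longrightarrow> smooth_step a b t = 1"
  using flat_pos[of "t - a"] by (simp add: smooth_step_def flat_eq_0)

section \<open>The algebra \<open>algebraA\<close>\<close>

lemma algebraA_binop:
  assumes \<phi>: "\<phi> \<in> algebraA V E ends len iota Gbar" and \<psi>: "\<psi> \<in> algebraA V E ends len iota Gbar"
    and cont: "continuous_on Gbar (\<lambda>x. op (\<phi> x) (\<psi> x))"
    and smooth: "\<And>f g S. open S \<Longrightarrow> smooth_on f S \<Longrightarrow> smooth_on g S \<Longrightarrow>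
      smooth_on (\<lambda>t. op (f t) (g t)) S"
    and deriv_0: "\<And>f g t. f differentiable (at t) \<Longrightarrow> g differentiable (at t) \<Longrightarrow>
      deriv f t = 0 \<Longrightarrow> deriv g t = 0 \<Longrightarrow> deriv (\<lambda>t. op (f t) (g t)) t = 0"
  shows "(\<lambda>x. op (\<phi> x) (\<psi> x)) \<in> algebraA V E ends len iota Gbar"
proof -
  let ?h = "\<lambda>x. op (\<phi> x) (\<psi> x)"
  let ?D = "\<lambda>u e t. deriv (edge_fun iota u e) t = 0"
  have edge_fun_h: "edge_fun iota ?h e = (\<lambda>t. op (edge_fun iota \<phi> e t) (edge_fun iota \<psi> e t))" for e
    by (simp add: edge_fun_def)
  have smooth_\<phi>: "\<forall>e\<in>E. smooth_on (edge_fun iota \<phi> e) {0<..<len e}"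
    and smooth_\<psi>: "\<forall>e\<in>E. smooth_on (edge_fun iota \<psi> e) {0<..<len e}"
    using \<phi> \<psi> by (simp_all add: algebraA_def)
  have deriv_h: "?D ?h e t" if "e \<in> E" "t \<in> {0<..<len e}" "?D \<phi> e t" "?D \<psi> e t" for e t
  proof -
    have "edge_fun iota \<phi> e differentiable (at t)" "edge_fun iota \<psi> e differentiable (at t)"
      using that(1,2) smooth_\<phi> smooth_\<psi> smooth_on_imp_differentiable by blast+
    then show ?thesis
      unfolding edge_fun_h using that(3,4) by (rule deriv_0)
  qed
  obtain F1 F2 where F: "finite F1" "F1 \<subseteq> E" "\<forall>e\<in>E - F1. \<forall>t\<in>{0<..<len e}. ?D \<phi> e t"
    "finite F2" "F2 \<subseteq> E" "\<forall>e\<in>E - F2. \<forall>t\<in>{0<..<len e}. ?D \<psi> e t"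
    using \<phi> \<psi> unfolding algebraA_def mem_Collect_eq by (elim conjE exE) blast
  have vertex: "\<exists>r>0. \<forall>e\<in>E. \<forall>t\<in>{0<..<len e}.
      gdist E ends len (Vtx v) (EPt e t) < r \<longrightarrow> ?D ?h e t" if "v \<in> V" for v
  proof -
    have "\<exists>r>0. \<forall>e\<in>E. \<forall>t\<in>{0<..<len e}. gdist E ends len (Vtx v) (EPt e t) < r \<longrightarrow> ?D \<phi> e t"
      "\<exists>r>0. \<forall>e\<in>E. \<forall>t\<in>{0<..<len e}. gdist E ends len (Vtx v) (EPt e t) < r \<longrightarrow> ?D \<psi> e t"
      using \<phi> \<psi> \<open>v \<in> V\<close> by (simp_all add: algebraA_def)
    then obtain r1 r2 where "0 < r1" "0 < r2"
      "\<forall>e\<in>E. \<forall>t\<in>{0<..<len e}. gdist E ends len (Vtx v) (EPt e t) < r1 \<longrightarrow> ?D \<phi> e t"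
      "\<forall>e\<in>E. \<forall>t\<in>{0<..<len e}. gdist E ends len (Vtx v) (EPt e t) < r2 \<longrightarrow> ?D \<psi> e t"
      by blast
    then show ?thesis
      using deriv_h by (intro exI[of _ "min r1 r2"]) simp
  qed
  show ?thesis
    unfolding algebraA_def
  proof (intro CollectI conjI ballI)
    show "continuous_on Gbar ?h"
      by (rule cont)
    show "smooth_on (edge_fun iota ?h e) {0<..<len e}" if "e \<in> E" for e
      unfolding edge_fun_h by (rule smooth) (use that smooth_\<phi> smooth_\<psi> in auto)
    show "\<exists>F. finite F \<and> F \<subseteq> E \<and> (\<forall>e\<in>E - F. \<forall>t\<in>{0<..<len e}. ?D ?h e t)"
      using F deriv_h by (intro exI[of _ "F1 \<union> F2"]) auto
  qed (rule vertex)
qed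

lemma algebraA_const: "(\<lambda>_. k) \<in> algebraA V E ends len iota Gbar"
  unfolding algebraA_def edge_fun_def by (auto simp: smooth_on_const intro: exI[of _ 1])

lemma algebraA_add:
  assumes "\<phi> \<in> algebraA V E ends len iota Gbar" "\<psi> \<in> algebraA V E ends len iota Gbar"
  shows "(\<lambda>x. \<phi> x + \<psi> x) \<in> algebraA V E ends len iota Gbar"
proof (rule algebraA_binop[OF assms])
  show "continuous_on Gbar (\<lambda>x. \<phi> x + \<psi> x)"
    using assms by (intro continuous_on_add) (simp_all add: algebraA_def)
  show "deriv (\<lambda>t. f t + g t) t = 0"
    if "f differentiable (at t)" "g differentiable (at t)" "deriv f t = 0" "deriv g t = 0"
    for f g :: "real \<Rightarrow> real" and t
  proof -
    have "DERIV f t :> deriv f t" "DERIV g t :> deriv g t"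
      using that(1,2) by (simp_all add: DERIV_deriv_iff_real_differentiable)
    then have "DERIV (\<lambda>t. f t + g t) t :> deriv f t + deriv g t"
      by (rule DERIV_add)
    then show ?thesis
      using that(3,4) by (simp add: DERIV_imp_deriv)
  qed
qed (rule smooth_on_add)

lemma algebraA_mult:
  assumes "\<phi> \<in> algebraA V E ends len iota Gbar" "\<psi> \<in> algebraA V E ends len iota Gbar"
  shows "(\<lambda>x. \<phi> x * \<psi> x) \<in> algebraA V E ends len iota Gbar"
proof (rule algebraA_binop[OF assms])
  show "continuous_on Gbar (\<lambda>x. \<phi> x * \<psi> x)"
    using assms by (intro continuous_on_mult) (simp_all add: algebraA_def)
  show "deriv (\<lambda>t. f t * g t) t = 0"
    if "f differentiable (at t)" "g differentiable (at t)" "deriv f t = 0" "deriv g t = 0"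
    for f g :: "real \<Rightarrow> real" and t
  proof -
    have "DERIV f t :> deriv f t" "DERIV g t :> deriv g t"
      using that(1,2) by (simp_all add: DERIV_deriv_iff_real_differentiable)
    then have "DERIV (\<lambda>t. f t * g t) t :> deriv f t * g t + deriv g t * f t"
      by (rule DERIV_mult)
    then show ?thesis
      using that(3,4) by (simp add: DERIV_imp_deriv)
  qed
qed (rule smooth_on_mult)

section \<open>Topological preliminaries\<close>

lemma compact_image_1_lipschitz:
  fixes \<gamma> :: "real \<Rightarrow> 'a::metric_space"
  assumes "\<And>s t. s \<in> {a..b} \<Longrightarrow> t \<in> {a..b} \<Longrightarrow> dist (\<gamma> s) (\<gamma> t) \<le> \<bar>s - t\<bar>"
  shows "compact (\<gamma> ` {a..b})"
proof -
  have "1-lipschitz_on {a..b} \<gamma>"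
    using assms by (intro lipschitz_onI) (auto simp: dist_real_def)
  then show ?thesis
    by (intro compact_continuous_image lipschitz_on_continuous_on) auto
qed

lemma ball_Int_closure_subset_closed:
  assumes "closed K" "ball c r \<inter> D \<subseteq> K"
  shows "ball c r \<inter> closure D \<subseteq> K"
proof -
  have "ball c r \<inter> closure D \<subseteq> closure (ball c r \<inter> D)"
    by (rule open_Int_closure_subset) simp
  also have "\<dots> \<subseteq> K"
    using assms closure_minimal by blast
  finally show ?thesis .
qed

lemma connected_component_isolated:
  assumes "x \<in> S" "0 < r" "S \<inter> ball x r \<subseteq> {x}"
  shows "connected_component_set S x = {x}"
proof -
  let ?C = "connected_component_set S x"
  have x: "x \<in> ?C"
    using assms(1) by (simp add: connected_component_refl_eq)
  have "ball x r \<inter> ?C = {} \<or> - {x} \<inter> ?C = {}"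
  proof (rule connectedD)
    show "?C \<subseteq> ball x r \<union> - {x}"
      using assms(2) by auto
    show "ball x r \<inter> - {x} \<inter> ?C = {}"
      using assms(3) connected_component_subset[of S x] by blast
  qed auto
  moreover have "x \<in> ball x r \<inter> ?C"
    using x assms(2) by simp
  ultimately have "- {x} \<inter> ?C = {}"
    by blast
  then show ?thesis
    using x by blast
qed

lemma compact_totally_disconnected_separation:
  fixes S :: "'a::metric_space set"
  assumes "compact S" "totally_disconnected S" "x \<in> S" "y \<in> S" "x \<noteq> y"
  obtains U W where "closed U" "closed W" "U \<union> W = S" "U \<inter> W = {}" "x \<in> U" "y \<in> W"
proof -
  have "separated_between (top_of_set S) {x} {y}"
  proof (rule cut_wire_fence_theorem_gen)
    show "compact_space (top_of_set S)"
      using assms(1) by (simp add: compact_space_subtopology)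
    show "Hausdorff_space (top_of_set S) \<or> regular_space (top_of_set S) \<or> normal_space (top_of_set S)"
      by (simp add: Hausdorff_space_subtopology)
    show "compactin (top_of_set S) {x}"
      using assms(3) by (simp add: compactin_subtopology)
    show "closedin (top_of_set S) {y}"
      using assms(4) by (simp add: closedin_subtopology_refl closed_subset)
  next
    fix C assume "connectedin (top_of_set S) C"
    then have C: "connected C" "C \<subseteq> S"
      by (simp_all add: connectedin_subtopology)
    show "disjnt C {x} \<or> disjnt C {y}"
    proof (rule ccontr)
      assume "\<not> (disjnt C {x} \<or> disjnt C {y})"
      then have "x \<in> C" "y \<in> C"
        by auto
      then have "C \<subseteq> connected_component_set S x"
        using C by (intro connected_component_maximal)
      moreover have "connected_component_set S x = {x}"
        using assms(2,3) unfolding totally_disconnected_def by simp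
      ultimately show False
        using \<open>y \<in> C\<close> assms(5) by auto
    qed
  qed
  then obtain U W where UW: "closedin (top_of_set S) U" "closedin (top_of_set S) W"
    "U \<union> W = S" "disjnt U W" "{x} \<subseteq> U" "{y} \<subseteq> W"
    unfolding separated_between_alt by auto
  have "closed S"
    using assms(1) by (rule compact_imp_closed)
  then have "closed U" "closed W"
    using UW(1,2) closedin_closed_trans by blast+
  then show ?thesis
    using UW that by (simp add: disjnt_def)
qed

lemma compact_disjoint_dist_pos:
  fixes U W :: "'a::metric_space set"
  assumes "compact U" "compact W" "U \<inter> W = {}"
  obtains d where "0 < d" "\<And>u w. u \<in> U \<Longrightarrow> w \<in> W \<Longrightarrow> d \<le> dist u w"
proof (cases "U = {} \<or> W = {}")
  case True
  then show ?thesis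
    using that[of 1] by auto
next
  case False
  have "\<exists>u0\<in>U. \<forall>u\<in>U. infdist u0 W \<le> infdist u W"
    using False by (intro continuous_attains_inf assms(1) continuous_on_infdist continuous_on_id) auto
  then obtain u0 where u0: "u0 \<in> U" "\<And>u. u \<in> U \<Longrightarrow> infdist u0 W \<le> infdist u W"
    by blast
  have "0 < infdist u0 W"
    using assms u0(1) False by (intro infdist_pos_not_in_closed compact_imp_closed) auto
  moreover have "infdist u0 W \<le> dist u w" if "u \<in> U" "w \<in> W" for u w
    using u0(2)[OF that(1)] infdist_le[OF that(2), of u] by linarith
  ultimately show ?thesis
    using that by blast
qed

lemma Tietze_real:
  fixes g :: "'a::metric_space \<Rightarrow> real"
  assumes "closed S" "S \<subseteq> T" "continuous_on S g"
  obtains f where "continuous_on T f" "\<And>x. x \<in> S \<Longrightarrow> f x = g x"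
proof -
  have "normal_space (top_of_set T)"
    by (simp add: metrizable_imp_normal_space metrizable_space_subtopology metrizable_space_euclidean)
  moreover have "closedin (top_of_set T) S"
    using assms(1,2) by (simp add: closed_subset)
  moreover have "continuous_map (subtopology (top_of_set T) S) euclideanreal g"
    using assms(2,3) by (simp add: subtopology_subtopology Int_absorb1)
  ultimately obtain f where "continuous_map (top_of_set T) euclideanreal f" "\<And>x. x \<in> S \<Longrightarrow> f x = g x"
    using Tietze_extension_realinterval[of "top_of_set T" S UNIV g] by auto
  then show ?thesis
    using that by simp
qed

section \<open>Metric graphs and their completions\<close>

locale mgraph =
  fixes V :: "'v set" and E :: "'e set" and ends :: "'e \<Rightarrow> 'v \<times> 'v" and len :: "'e \<Rightarrow> real"
  assumes metric_graph: "metric_graph V E ends len"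
begin

abbreviation "pts \<equiv> gpoints V E len"
abbreviation "vd \<equiv> vdist E ends len"
abbreviation "gd \<equiv> gdist E ends len"

lemma len_pos: "e \<in> E \<Longrightarrow> 0 < len e"
  and fst_ends_in_V: "e \<in> E \<Longrightarrow> fst (ends e) \<in> V"
  and snd_ends_in_V: "e \<in> E \<Longrightarrow> snd (ends e) \<in> V"
  and finite_incident: "v \<in> V \<Longrightarrow> finite (incident E ends v)"
  and walk_exists: "u \<in> V \<Longrightarrow> w \<in> V \<Longrightarrow> \<exists>L. walk E ends len u w L"
  using metric_graph by (auto simp: metric_graph_def)

lemma walk_nonneg: "walk E ends len u w L \<Longrightarrow> 0 \<le> L"
  by (induction rule: walk.induct) (auto dest: len_pos)

lemma vd_nonneg: "u \<in> V \<Longrightarrow> w \<in> V \<Longrightarrow> 0 \<le> vd u w"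
  unfolding vdist_def using walk_exists walk_nonneg by (intro cInf_greatest) auto

lemma vd_le_walk: "walk E ends len u w L \<Longrightarrow> vd u w \<le> L"
  unfolding vdist_def using walk_nonneg by (intro cInf_lower) (auto simp: bdd_below_def)

lemma vd_self [simp]: "vd u u = 0"
proof -
  have "0 \<le> vd u u"
    unfolding vdist_def using walk.walk_nil[of E ends len u] walk_nonneg by (intro cInf_greatest) auto
  then show ?thesis
    using vd_le_walk[OF walk.walk_nil[of E ends len u]] by linarith
qed

lemma vd_edge_le: "e \<in> E \<Longrightarrow> vd (fst (ends e)) (snd (ends e)) \<le> len e"
  using vd_le_walk[OF walk.walk_fwd[OF _ _ walk.walk_nil]] by fastforce

definition vradius :: "'v \<Rightarrow> real" where
  "vradius u = (if incident E ends u = {} then 1 else Min (len ` incident E ends u))"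

lemma vradius_pos: "u \<in> V \<Longrightarrow> 0 < vradius u"
  unfolding vradius_def using finite_incident by (auto simp: incident_def len_pos)

lemma vradius_le_len: "e \<in> E \<Longrightarrow> fst (ends e) = u \<or> snd (ends e) = u \<Longrightarrow> vradius u \<le> len e"
proof -
  assume e: "e \<in> E" "fst (ends e) = u \<or> snd (ends e) = u"
  then have "u \<in> V" "e \<in> incident E ends u"
    using fst_ends_in_V snd_ends_in_V by (auto simp: incident_def)
  then show ?thesis
    unfolding vradius_def using finite_incident by auto
qed

lemma walk_ge_vradius: "walk E ends len u w L \<Longrightarrow> u \<noteq> w \<Longrightarrow> vradius u \<le> L"
proof (induction rule: walk.induct)
  case (walk_nil u)
  then show ?case by simp
next
  case (walk_fwd e u x w L)
  then show ?case using vradius_le_len[of e u] walk_nonneg by fastforce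
next
  case (walk_bwd e x u w L)
  then show ?case using vradius_le_len[of e u] walk_nonneg by fastforce
qed

lemma vd_ge_vradius: "u \<in> V \<Longrightarrow> w \<in> V \<Longrightarrow> u \<noteq> w \<Longrightarrow> vradius u \<le> vd u w"
  unfolding vdist_def using walk_exists walk_ge_vradius by (intro cInf_greatest) auto

lemma gpointsE:
  assumes "x \<in> pts"
  obtains v where "x = Vtx v" "v \<in> V" | e t where "x = EPt e t" "e \<in> E" "0 < t" "t < len e"
  using assms unfolding gpoints_def by auto

lemma Vtx_in_pts: "v \<in> V \<Longrightarrow> Vtx v \<in> pts"
  and EPt_in_pts: "e \<in> E \<Longrightarrow> 0 < t \<Longrightarrow> t < len e \<Longrightarrow> EPt e t \<in> pts"
  unfolding gpoints_def by auto

lemma gd_EPt_EPt: "gd (EPt e s) (EPt f t) =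
   (let m = min (min (min (s + vd (fst (ends e)) (fst (ends f)) + t)
           (s + vd (fst (ends e)) (snd (ends f)) + (len f - t)))
           ((len e - s) + vd (snd (ends e)) (fst (ends f)) + t))
           ((len e - s) + vd (snd (ends e)) (snd (ends f)) + (len f - t))
    in if e = f then min m \<bar>s - t\<bar> else m)"
proof -
  have Min4: "Min ({a, b, c, d} \<union> X) = min (min (min a b) c) d" if "X = {}" for a b c d :: real and X
    using that by (simp add: min.assoc min.commute min.left_commute)
  have Min5: "Min ({a, b, c, d} \<union> {z}) = min (min (min (min a b) c) d) z" for a b c d z :: real
    by (simp add: min.assoc min.commute min.left_commute)
  show ?thesis
    by (simp add: Min4 Min5 Let_def min.assoc)
qed

lemma vd_ends_nonneg:
  assumes "e \<in> E" "f \<in> E"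
  shows "0 \<le> vd (fst (ends e)) (fst (ends f))" "0 \<le> vd (fst (ends e)) (snd (ends f))"
    "0 \<le> vd (snd (ends e)) (fst (ends f))" "0 \<le> vd (snd (ends e)) (snd (ends f))"
  using assms by (auto intro!: vd_nonneg fst_ends_in_V snd_ends_in_V)

lemma gd_pos:
  assumes "x \<in> pts" "y \<in> pts" "x \<noteq> y"
  shows "0 < gd x y"
proof (rule gpointsE[OF assms(1)])
  fix u assume x: "x = Vtx u" "u \<in> V"
  show ?thesis
  proof (rule gpointsE[OF assms(2)])
    fix w assume "y = Vtx w" "w \<in> V"
    then show ?thesis using x assms(3) vd_ge_vradius[of u w] vradius_pos[of u] by auto
  next
    fix f t assume "y = EPt f t" "f \<in> E" "0 < t" "t < len f"
    then show ?thesis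
      using x vd_nonneg[of u "fst (ends f)"] vd_nonneg[of u "snd (ends f)"]
      by (auto simp: fst_ends_in_V snd_ends_in_V)
  qed
next
  fix e s assume x: "x = EPt e s" "e \<in> E" "0 < s" "s < len e"
  show ?thesis
  proof (rule gpointsE[OF assms(2)])
    fix w assume "y = Vtx w" "w \<in> V"
    then show ?thesis
      using x vd_nonneg[of "fst (ends e)" w] vd_nonneg[of "snd (ends e)" w]
      by (auto simp: fst_ends_in_V snd_ends_in_V)
  next
    fix f t assume y: "y = EPt f t" "f \<in> E" "0 < t" "t < len f"
    then have "s \<noteq> t \<or> e \<noteq> f"
      using x assms(3) by auto
    then show ?thesis
      using x y vd_ends_nonneg[of e f] unfolding gd_EPt_EPt Let_def by auto
  qed
qed

lemma gd_same_edge_le: "gd (EPt e s) (EPt e t) \<le> \<bar>s - t\<bar>"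
  unfolding gd_EPt_EPt Let_def by simp

lemma gd_fst_le: "gd (Vtx (fst (ends e))) (EPt e t) \<le> t"
  and gd_snd_le: "gd (Vtx (snd (ends e))) (EPt e t) \<le> len e - t"
  by simp_all

lemma gd_near_EPt:
  assumes e: "e \<in> E" "0 < s" "s < len e" and x: "x \<in> pts"
    and near: "gd (EPt e s) x < min s (len e - s)"
  shows "\<exists>t. x = EPt e t \<and> gd (EPt e s) x = \<bar>s - t\<bar>"
proof (rule gpointsE[OF x])
  fix w assume "x = Vtx w" "w \<in> V"
  then show ?thesis
    using near e vd_nonneg[of "fst (ends e)" w] vd_nonneg[of "snd (ends e)" w]
    by (auto simp: fst_ends_in_V snd_ends_in_V)
next
  fix f t assume y: "x = EPt f t" "f \<in> E" "0 < t" "t < len f"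
  show ?thesis
  proof (cases "e = f")
    case True
    then show ?thesis
      using y near e vd_ends_nonneg[of e f] unfolding gd_EPt_EPt Let_def
      by (auto simp: min_def split: if_splits)
  next
    case False
    then show ?thesis
      using y near e vd_ends_nonneg[of e f] unfolding gd_EPt_EPt Let_def by auto
  qed
qed

lemma gd_near_Vtx:
  assumes v: "v \<in> V" and x: "x \<in> pts" and near: "gd (Vtx v) x < vradius v"
  shows "x = Vtx v \<or> (\<exists>e t. x = EPt e t \<and> e \<in> E \<and> 0 < t \<and> t < len e \<and>
           (fst (ends e) = v \<and> t = gd (Vtx v) x \<or> snd (ends e) = v \<and> len e - t = gd (Vtx v) x))"
proof (rule gpointsE[OF x])
  fix w assume "x = Vtx w" "w \<in> V"
  then show ?thesis using near v vd_ge_vradius[of v w] by auto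
next
  fix e t assume y: "x = EPt e t" "e \<in> E" "0 < t" "t < len e"
  have far: "fst (ends e) \<noteq> v \<Longrightarrow> vradius v \<le> vd v (fst (ends e))"
     "snd (ends e) \<noteq> v \<Longrightarrow> vradius v \<le> vd v (snd (ends e))"
    using v y by (auto intro!: vd_ge_vradius fst_ends_in_V snd_ends_in_V)
  have gd: "gd (Vtx v) x = min (vd v (fst (ends e)) + t) (vd v (snd (ends e)) + (len e - t))"
    using y by simp
  show ?thesis
  proof (cases "vd v (fst (ends e)) + t \<le> vd v (snd (ends e)) + (len e - t)")
    case True
    then have "fst (ends e) = v"
      using far(1) near gd y by (cases "fst (ends e) = v") (auto simp: min_def)
    then show ?thesis using y gd True by auto
  next
    case False
    then have "snd (ends e) = v"
      using far(2) near gd y by (cases "snd (ends e) = v") (auto simp: min_def)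
    then show ?thesis using y gd False by auto
  qed
qed

lemma gd_EPt_ge_via_ends:
  assumes x: "x \<in> pts" and off_edge: "\<And>t'. x \<noteq> EPt e t'"
  shows "min (t + gd (Vtx (fst (ends e))) x) (len e - t + gd (Vtx (snd (ends e))) x) \<le> gd (EPt e t) x"
proof (rule gpointsE[OF x])
  fix w assume "x = Vtx w"
  then show ?thesis by simp
next
  fix f t' assume "x = EPt f t'"
  moreover have "f \<noteq> e"
    using off_edge calculation by auto
  ultimately show ?thesis
    unfolding gd_EPt_EPt Let_def by (simp add: min_def)
qed

lemma gd_midpoints_ge:
  assumes "e \<in> E" "f \<in> E" "e \<noteq> f"
  shows "len e / 2 \<le> gd (EPt e (len e / 2)) (EPt f (len f / 2))"
  using assms vd_ends_nonneg[of e f] len_pos[of f] unfolding gd_EPt_EPt Let_def by auto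

end

locale mgraph_completion = mgraph V E ends len
  for V :: "'v set" and E :: "'e set" and ends :: "'e \<Rightarrow> 'v \<times> 'v" and len :: "'e \<Rightarrow> real" +
  fixes iota :: "('v, 'e) gpoint \<Rightarrow> 'p::metric_space" and Gbar :: "'p set"
  assumes completion: "is_completion V E ends len iota Gbar"
    and compact_Gbar: "compact Gbar"
begin

text \<open>Unfolding \<open>gdist\<close> at edge points produces a minimum over a set of four or five terms,
  which makes the simplifier loop on goals mentioning several edge points.\<close>

declare gdist.simps(2-4) [simp del]

abbreviation "vpt v \<equiv> iota (Vtx v)"
abbreviation "ept e t \<equiv> iota (EPt e t)"

lemma dist_iota: "x \<in> pts \<Longrightarrow> y \<in> pts \<Longrightarrow> dist (iota x) (iota y) = gd x y"
  and Gbar_eq_closure: "Gbar = closure (iota ` pts)"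
  using completion by (simp_all add: is_completion_def)

lemma iota_pts_subset: "iota ` pts \<subseteq> Gbar"
  unfolding Gbar_eq_closure by (rule closure_subset)

lemma iota_eq_iff: "x \<in> pts \<Longrightarrow> y \<in> pts \<Longrightarrow> iota x = iota y \<longleftrightarrow> x = y"
  using dist_iota[of x y] gd_pos[of x y] by force

definition edge_path :: "'e \<Rightarrow> real \<Rightarrow> 'p" where
  "edge_path e t =
    (if t \<le> 0 then vpt (fst (ends e)) else if len e \<le> t then vpt (snd (ends e)) else ept e t)"

lemma edge_path_interior: "0 < t \<Longrightarrow> t < len e \<Longrightarrow> edge_path e t = ept e t"
  by (simp add: edge_path_def)

lemma edge_path_in_pts: "e \<in> E \<Longrightarrow> edge_path e t \<in> iota ` pts"
  by (auto simp: edge_path_def intro!: imageI Vtx_in_pts EPt_in_pts fst_ends_in_V snd_ends_in_V)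

lemma dist_edge_path_le:
  assumes e: "e \<in> E" and ab: "a \<in> {0..len e}" "b \<in> {0..len e}"
  shows "dist (edge_path e a) (edge_path e b) \<le> \<bar>a - b\<bar>"
proof -
  have Vtx: "Vtx (fst (ends e)) \<in> pts" "Vtx (snd (ends e)) \<in> pts"
    using e by (auto intro: Vtx_in_pts fst_ends_in_V snd_ends_in_V)
  have ordered: "dist (edge_path e a) (edge_path e b) \<le> b - a"
    if "0 \<le> a" "a \<le> b" "b \<le> len e" for a b
  proof -
    have "a = b \<or> a = 0 \<and> 0 < b \<and> b < len e \<or> a = 0 \<and> b = len e
      \<or> 0 < a \<and> a < b \<and> b < len e \<or> 0 < a \<and> a < len e \<and> b = len e"
      using that by arith
    then consider "a = b" | "a = 0" "0 < b" "b < len e" | "a = 0" "b = len e"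
      | "0 < a" "a < b" "b < len e" | "0 < a" "a < len e" "b = len e"
      by blast
    then show ?thesis
    proof cases
      case 2
      then show ?thesis
        using e gd_fst_le[of e b] by (simp add: edge_path_def dist_iota Vtx EPt_in_pts)
    next
      case 3
      then show ?thesis
        using e vd_edge_le[of e] len_pos[OF e] by (simp add: edge_path_def dist_iota Vtx)
    next
      case 4
      then show ?thesis
        using e gd_same_edge_le[of e a b]
        by (simp add: edge_path_def dist_iota EPt_in_pts abs_minus_commute)
    next
      case 5
      then have "dist (edge_path e a) (edge_path e b) = dist (vpt (snd (ends e))) (ept e a)"
        by (simp add: edge_path_def dist_commute)
      also have "\<dots> \<le> len e - a"
        using 5 e gd_snd_le[of e a] by (simp add: dist_iota Vtx EPt_in_pts)
      finally show ?thesis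
        using 5 by simp
    qed simp
  qed
  show ?thesis
    using ordered[of a b] ordered[of b a] ab by (cases "a \<le> b") (auto simp: dist_commute)
qed

lemma compact_edge_path_image: "e \<in> E \<Longrightarrow> 0 \<le> a \<Longrightarrow> b \<le> len e \<Longrightarrow> compact (edge_path e ` {a..b})"
  by (intro compact_image_1_lipschitz dist_edge_path_le) auto

text \<open>Points of \<open>Gbar\<close> close to a graph point are graph points themselves: the graph points of
  a small ball lie in a compact union of edge segments, which being closed also contains the
  limit points.\<close>

lemma edge_ball_in_edge:
  assumes e: "e \<in> E" "0 < s" "s < len e" and q: "q \<in> Gbar"
    and near: "dist (ept e s) q < min s (len e - s)"
  obtains t where "0 < t" "t < len e" "q = ept e t" "dist (ept e s) q = \<bar>s - t\<bar>"
proof -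
  define \<rho> where "\<rho> = (dist (ept e s) q + min s (len e - s)) / 2"
  have \<rho>: "dist (ept e s) q < \<rho>" "\<rho> < min s (len e - s)"
    using near unfolding \<rho>_def by auto
  have "ball (ept e s) \<rho> \<inter> iota ` pts \<subseteq> edge_path e ` {s - \<rho>..s + \<rho>}"
  proof
    fix p assume "p \<in> ball (ept e s) \<rho> \<inter> iota ` pts"
    then obtain x where x: "x \<in> pts" "p = iota x" "dist (ept e s) (iota x) < \<rho>"
      by auto
    then have "gd (EPt e s) x < min s (len e - s)"
      using \<rho> e dist_iota[of "EPt e s" x] by (simp add: EPt_in_pts)
    then obtain t where t: "x = EPt e t" "gd (EPt e s) x = \<bar>s - t\<bar>"
      using gd_near_EPt e x(1) by blast
    then have "t \<in> {s - \<rho>..s + \<rho>}" "0 < t" "t < len e"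
      using x e \<rho> dist_iota[of "EPt e s" x] by (auto simp: EPt_in_pts)
    moreover have "p = edge_path e t"
      using t x calculation by (simp add: edge_path_interior)
    ultimately show "p \<in> edge_path e ` {s - \<rho>..s + \<rho>}"
      by blast
  qed
  then have "ball (ept e s) \<rho> \<inter> Gbar \<subseteq> edge_path e ` {s - \<rho>..s + \<rho>}"
    unfolding Gbar_eq_closure using \<rho> e
    by (intro ball_Int_closure_subset_closed compact_imp_closed compact_edge_path_image) auto
  then obtain t where t: "t \<in> {s - \<rho>..s + \<rho>}" "q = edge_path e t"
    using q \<rho> by auto
  then have t_in: "0 < t" "t < len e" and "q = ept e t"
    using \<rho> by (auto simp: edge_path_interior)
  moreover have "gd (EPt e s) (EPt e t) < min s (len e - s)"
    using near \<open>q = ept e t\<close> e t_in dist_iota by (simp add: EPt_in_pts)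
  then have "dist (ept e s) q = \<bar>s - t\<bar>"
    using gd_near_EPt[OF e EPt_in_pts[OF e(1) t_in]] \<open>q = ept e t\<close> e t_in dist_iota
    by (auto simp: EPt_in_pts)
  ultimately show ?thesis
    using that by blast
qed

lemma vertex_ball_in_pts:
  assumes v: "v \<in> V" and q: "q \<in> Gbar" and near: "dist (vpt v) q < vradius v"
  shows "q \<in> iota ` pts"
proof -
  define \<rho> where "\<rho> = (dist (vpt v) q + vradius v) / 2"
  have \<rho>: "dist (vpt v) q < \<rho>" "\<rho> < vradius v"
    using near unfolding \<rho>_def by auto
  define I1 where "I1 = {e\<in>E. fst (ends e) = v}"
  define I2 where "I2 = {e\<in>E. snd (ends e) = v}"
  have finite: "finite I1" "finite I2"
    using finite_incident[OF v] unfolding I1_def I2_def incident_def by (auto elim: finite_subset[rotated])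
  have long: "e \<in> I1 \<union> I2 \<Longrightarrow> \<rho> < len e" for e
    using vradius_le_len[of e v] \<rho> unfolding I1_def I2_def by force
  define K where "K = insert (vpt v)
    ((\<Union>e\<in>I1. edge_path e ` {0..\<rho>}) \<union> (\<Union>e\<in>I2. edge_path e ` {len e - \<rho>..len e}))"
  have "compact K"
    unfolding K_def using finite long \<rho> vradius_pos[OF v]
    by (intro compact_insert compact_Un compact_UN compact_edge_path_image)
      (auto simp: I1_def I2_def less_imp_le)
  have "K \<subseteq> iota ` pts"
    unfolding K_def I1_def I2_def using v by (auto intro!: edge_path_in_pts Vtx_in_pts)
  moreover have "ball (vpt v) \<rho> \<inter> iota ` pts \<subseteq> K"
  proof
    fix p assume "p \<in> ball (vpt v) \<rho> \<inter> iota ` pts"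
    then obtain x where x: "x \<in> pts" "p = iota x" "gd (Vtx v) x < \<rho>"
      using dist_iota[OF Vtx_in_pts[OF v]] by auto
    then consider "x = Vtx v"
      | e t where "x = EPt e t" "e \<in> E" "0 < t" "t < len e" "fst (ends e) = v" "t = gd (Vtx v) x"
      | e t where "x = EPt e t" "e \<in> E" "0 < t" "t < len e" "snd (ends e) = v" "len e - t = gd (Vtx v) x"
      using gd_near_Vtx[OF v x(1)] \<rho> by fastforce
    then show "p \<in> K"
    proof cases
      case 2
      then have "e \<in> I1" "t \<in> {0..\<rho>}" "p = edge_path e t"
        using x unfolding I1_def by (auto simp: edge_path_interior)
      then show ?thesis
        unfolding K_def by blast
    next
      case 3
      then have "e \<in> I2" "t \<in> {len e - \<rho>..len e}" "p = edge_path e t"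
        using x unfolding I2_def by (auto simp: edge_path_interior)
      then show ?thesis
        unfolding K_def by blast
    qed (use x K_def in simp)
  qed
  then have "ball (vpt v) \<rho> \<inter> Gbar \<subseteq> K"
    unfolding Gbar_eq_closure using \<open>compact K\<close>
    by (intro ball_Int_closure_subset_closed compact_imp_closed)
  ultimately show ?thesis
    using q \<rho> by auto
qed

lemma ideal_point_far_from_edge:
  assumes p: "p \<in> Gbar" "p \<notin> iota ` pts" and e: "e \<in> E"
  obtains \<delta> where "0 < \<delta>" "\<And>t. 0 < t \<Longrightarrow> t < len e \<Longrightarrow> \<delta> \<le> dist p (ept e t)"
proof
  let ?K = "edge_path e ` {0..len e}"
  have "closed ?K"
    using e by (intro compact_imp_closed compact_edge_path_image) auto
  moreover have "p \<notin> ?K"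
    using p e edge_path_in_pts by blast
  ultimately show "0 < infdist p ?K"
    using len_pos[OF e] by (intro infdist_pos_not_in_closed) auto
  fix t assume "0 < t" "t < len e"
  then have "ept e t \<in> ?K"
    using edge_path_interior[of t e, symmetric] by (simp add: less_imp_le)
  then show "infdist p ?K \<le> dist p (ept e t)"
    by (rule infdist_le)
qed

lemma ideal_point_dist_via_ends:
  assumes p: "p \<in> Gbar" "p \<notin> iota ` pts" and e: "e \<in> E" "0 < t" "t < len e"
  shows "min (t + dist (vpt (fst (ends e))) p) (len e - t + dist (vpt (snd (ends e))) p)
    \<le> dist (ept e t) p"
proof -
  obtain \<delta> where \<delta>: "0 < \<delta>" "\<And>t. 0 < t \<Longrightarrow> t < len e \<Longrightarrow> \<delta> \<le> dist p (ept e t)"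
    using ideal_point_far_from_edge[OF p e(1)] by blast
  define H where "H = {y. min (t + dist (vpt (fst (ends e))) y) (len e - t + dist (vpt (snd (ends e))) y)
    \<le> dist (ept e t) y}"
  have "closed H"
    unfolding H_def by (intro closed_Collect_le continuous_intros)
  have "ball p \<delta> \<inter> iota ` pts \<subseteq> H"
  proof
    fix q assume "q \<in> ball p \<delta> \<inter> iota ` pts"
    then obtain x where x: "x \<in> pts" "q = iota x" "dist p (iota x) < \<delta>"
      by auto
    have "x \<noteq> EPt e t'" for t'
    proof
      assume "x = EPt e t'"
      then have "0 < t'" "t' < len e"
        using x(1) unfolding gpoints_def by auto
      then show False
        using \<delta>(2) x \<open>x = EPt e t'\<close> by force
    qed
    then show "q \<in> H"
      using gd_EPt_ge_via_ends[OF x(1)] x e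
      by (simp add: H_def dist_iota Vtx_in_pts EPt_in_pts fst_ends_in_V snd_ends_in_V)
  qed
  then have "ball p \<delta> \<inter> Gbar \<subseteq> H"
    unfolding Gbar_eq_closure by (rule ball_Int_closure_subset_closed[OF \<open>closed H\<close>])
  moreover have "p \<in> ball p \<delta> \<inter> Gbar"
    using p \<delta>(1) by simp
  ultimately show ?thesis
    unfolding H_def by blast
qed

text \<open>Midpoints of edges of length at least \<open>d\<close> are \<open>d/2\<close>-separated, so by total
  boundedness of the compact space only finitely many of them exist.\<close>

lemma finite_long_edges:
  assumes "0 < d"
  shows "finite {e\<in>E. d \<le> len e}"
proof -
  define S where "S = {e\<in>E. d \<le> len e}"
  define m where "m e = ept e (len e / 2)" for e
  have m_in: "EPt e (len e / 2) \<in> pts" if "e \<in> S" for e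
    using that len_pos unfolding S_def by (auto intro!: EPt_in_pts)
  have separated: "d / 2 \<le> dist (m e) (m f)" if "e \<in> S" "f \<in> S" "e \<noteq> f" for e f
    using gd_midpoints_ge[of e f] that dist_iota[OF m_in m_in] unfolding m_def S_def by fastforce
  obtain k where k: "finite k" "Gbar \<subseteq> (\<Union>c\<in>k. ball c (d / 4))"
    using seq_compact_imp_totally_bounded[OF compact_imp_seq_compact[OF compact_Gbar]] assms
    by (metis divide_pos_pos zero_less_numeral)
  have "\<exists>c\<in>k. m e \<in> ball c (d / 4)" if "e \<in> S" for e
    using k(2) iota_pts_subset m_in[OF that] unfolding m_def by blast
  then obtain c where c: "\<And>e. e \<in> S \<Longrightarrow> c e \<in> k \<and> m e \<in> ball (c e) (d / 4)"
    by metis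
  have "inj_on c S"
  proof (rule inj_onI)
    fix e f assume ef: "e \<in> S" "f \<in> S" "c e = c f"
    have "dist (m e) (m f) \<le> dist (m e) (c e) + dist (c e) (m f)"
      by (rule dist_triangle)
    also have "\<dots> = dist (c e) (m e) + dist (c f) (m f)"
      using ef(3) by (simp add: dist_commute)
    also have "\<dots> < d / 2"
      using c[OF ef(1)] c[OF ef(2)] by simp
    finally show "e = f"
      using separated ef(1,2) by fastforce
  qed
  then show ?thesis
    using c k(1) inj_on_finite unfolding S_def by blast
qed

definition edge_pts :: "('v, 'e) gpoint set" where
  "edge_pts = {EPt e t |e t. e \<in> E \<and> 0 < t \<and> t < len e}"

definition nodes :: "'p set" where
  "nodes = Gbar - iota ` edge_pts"

lemma ept_in_edge_pts: "e \<in> E \<Longrightarrow> 0 < t \<Longrightarrow> t < len e \<Longrightarrow> ept e t \<in> iota ` edge_pts"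
  unfolding edge_pts_def by blast

lemma edge_ptsE:
  assumes "p \<in> iota ` edge_pts"
  obtains e t where "e \<in> E" "0 < t" "t < len e" "p = ept e t"
  using assms unfolding edge_pts_def by blast

lemma edge_pts_subset: "edge_pts \<subseteq> pts"
  unfolding edge_pts_def gpoints_def by blast

lemma nodes_subset: "nodes \<subseteq> Gbar"
  unfolding nodes_def by blast

lemma vpt_in_nodes: "v \<in> V \<Longrightarrow> vpt v \<in> nodes"
  using iota_pts_subset iota_eq_iff[OF Vtx_in_pts] edge_pts_subset Vtx_in_pts
  unfolding nodes_def edge_pts_def by blast

lemma ideal_in_nodes: "p \<in> Gbar \<Longrightarrow> p \<notin> iota ` pts \<Longrightarrow> p \<in> nodes"
  using edge_pts_subset unfolding nodes_def by blast

lemma nodesE: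
  assumes "p \<in> nodes"
  obtains v where "v \<in> V" "p = vpt v" | "p \<in> Gbar" "p \<notin> iota ` pts"
  using assms that unfolding nodes_def edge_pts_def gpoints_def by blast

lemma nodes_Int_ball_vpt:
  assumes v: "v \<in> V"
  shows "nodes \<inter> ball (vpt v) (vradius v) = {vpt v}"
proof
  show "nodes \<inter> ball (vpt v) (vradius v) \<subseteq> {vpt v}"
  proof
    fix q assume q: "q \<in> nodes \<inter> ball (vpt v) (vradius v)"
    then have "q \<in> iota ` pts"
      using vertex_ball_in_pts[OF v] nodes_subset by auto
    moreover have "q \<in> nodes"
      using q by simp
    ultimately obtain w where w: "w \<in> V" "q = vpt w"
      by (auto elim: nodesE)
    then have "vd v w < vradius v"
      using q dist_iota[OF Vtx_in_pts[OF v] Vtx_in_pts[OF w(1)]] by simp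
    then show "q \<in> {vpt v}"
      using vd_ge_vradius[OF v w(1)] w by force
  qed
  show "{vpt v} \<subseteq> nodes \<inter> ball (vpt v) (vradius v)"
    using vpt_in_nodes[OF v] vradius_pos[OF v] by simp
qed

lemma closed_nodes: "closed nodes"
proof -
  define edge_balls where "edge_balls = (\<Union>e\<in>E. \<Union>s\<in>{0<..<len e}. ball (ept e s) (min s (len e - s)))"
  have "nodes = Gbar \<inter> - edge_balls"
  proof (intro equalityI subsetI)
    fix q assume q: "q \<in> nodes"
    have "q \<notin> edge_balls"
    proof
      assume "q \<in> edge_balls"
      then obtain e s where "e \<in> E" "0 < s" "s < len e" "dist (ept e s) q < min s (len e - s)"
        unfolding edge_balls_def by auto
      then show False
        using edge_ball_in_edge q nodes_subset ept_in_edge_pts unfolding nodes_def by blast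
    qed
    then show "q \<in> Gbar \<inter> - edge_balls"
      using q nodes_subset by auto
  next
    fix q assume q: "q \<in> Gbar \<inter> - edge_balls"
    have "q \<notin> iota ` edge_pts"
    proof
      assume "q \<in> iota ` edge_pts"
      then obtain e t where "e \<in> E" "0 < t" "t < len e" "q = ept e t"
        by (rule edge_ptsE)
      then have "q \<in> edge_balls"
        unfolding edge_balls_def by force
      then show False
        using q by blast
    qed
    then show "q \<in> nodes"
      using q unfolding nodes_def by blast
  qed
  moreover have "closed Gbar"
    using compact_Gbar by (rule compact_imp_closed)
  moreover have "open edge_balls"
    unfolding edge_balls_def by (intro open_UN ballI open_ball)
  ultimately show ?thesis
    by (simp add: closed_Int closed_Compl)
qed

lemma compact_nodes: "compact nodes"
  using compact_Int_closed[OF compact_Gbar closed_nodes] nodes_subset by (simp add: Int_absorb1)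

lemma gboundary_eq_nodes_diff: "gboundary V E len B iota Gbar = nodes - vpt ` (V - B)"
proof -
  have "pts - Vtx ` B = edge_pts \<union> Vtx ` (V - B)"
    unfolding gpoints_def edge_pts_def by blast
  then show ?thesis
    unfolding gboundary_def Gint_def nodes_def by auto
qed

lemma closed_gboundary: "closed (gboundary V E len B iota Gbar)"
proof -
  have "gboundary V E len B iota Gbar = nodes \<inter> - (\<Union>v\<in>V - B. ball (vpt v) (vradius v))"
    using nodes_Int_ball_vpt vradius_pos unfolding gboundary_eq_nodes_diff by fastforce
  then show ?thesis
    using closed_nodes by auto
qed

text \<open>Vertices are isolated in \<open>nodes\<close>, so a component of \<open>nodes\<close> through an ideal point
  avoids the vertices and hence lies in the boundary.\<close>

lemma totally_disconnected_nodes: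
  assumes "totally_disconnected (gboundary V E len B iota Gbar)"
  shows "totally_disconnected nodes"
  unfolding totally_disconnected_def
proof
  have vertex_component: "connected_component_set nodes (vpt v) = {vpt v}" if "v \<in> V" for v
    using connected_component_isolated[OF vpt_in_nodes vradius_pos] nodes_Int_ball_vpt that
    by blast
  fix x assume x: "x \<in> nodes"
  let ?C = "connected_component_set nodes x"
  show "?C = {x}"
  proof (cases rule: nodesE[OF x])
    case (1 v)
    then show ?thesis
      using vertex_component by simp
  next
    case 2
    have x_in: "x \<in> ?C"
      using x by (simp add: connected_component_refl_eq)
    have "vpt v \<notin> ?C" if "v \<in> V" for v
    proof
      assume "vpt v \<in> ?C"
      then have "?C = {vpt v}"
        using vertex_component[OF that] connected_component_eq by metis
      then show False
        using x_in 2 that Vtx_in_pts by blast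
    qed
    then have "?C \<subseteq> gboundary V E len B iota Gbar"
      unfolding gboundary_eq_nodes_diff using connected_component_subset by blast
    then have "?C \<subseteq> connected_component_set (gboundary V E len B iota Gbar) x"
      using x_in by (intro connected_component_maximal) auto
    also have "\<dots> = {x}"
      using assms x_in \<open>?C \<subseteq> gboundary V E len B iota Gbar\<close>
      unfolding totally_disconnected_def by blast
    finally show ?thesis
      using x_in by blast
  qed
qed

end

section \<open>Separating points by functions in \<open>algebraA\<close>\<close>

context mgraph_completion
begin

definition graph_fun :: "('p \<Rightarrow> real) \<Rightarrow> ('e \<Rightarrow> real \<Rightarrow> real) \<Rightarrow> 'p \<Rightarrow> real" where
  "graph_fun c f p =
    (if p \<in> iota ` edge_pts then (case inv_into edge_pts iota p of EPt e t \<Rightarrow> f e t | Vtx _ \<Rightarrow> c p)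
     else c p)"

lemma graph_fun_ept: "e \<in> E \<Longrightarrow> 0 < t \<Longrightarrow> t < len e \<Longrightarrow> graph_fun c f (ept e t) = f e t"
proof -
  assume "e \<in> E" "0 < t" "t < len e"
  then have x: "EPt e t \<in> edge_pts"
    unfolding edge_pts_def by blast
  have "inj_on iota edge_pts"
    using iota_eq_iff edge_pts_subset by (intro inj_onI) blast
  then have "inv_into edge_pts iota (ept e t) = EPt e t"
    using x by (rule inv_into_f_f)
  then show ?thesis
    using x unfolding graph_fun_def by simp
qed

lemma graph_fun_nodes: "p \<notin> iota ` edge_pts \<Longrightarrow> graph_fun c f p = c p"
  unfolding graph_fun_def by simp

definition admissible :: "('p \<Rightarrow> real) \<Rightarrow> 'e set \<Rightarrow> ('e \<Rightarrow> real \<Rightarrow> real) \<Rightarrow> bool" where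
  "admissible c F f \<longleftrightarrow> continuous_on nodes c \<and> finite F \<and> F \<subseteq> E \<and>
     (\<forall>e\<in>E. smooth_on (f e) {0<..<len e} \<and>
        (\<exists>a b. 0 < a \<and> b < len e \<and> (\<forall>t\<le>a. f e t = c (vpt (fst (ends e)))) \<and>
                                      (\<forall>t\<ge>b. f e t = c (vpt (snd (ends e)))))) \<and>
     (\<forall>e\<in>E - F. \<forall>t. f e t = c (vpt (fst (ends e))))"

context
  fixes c F f
  assumes admissible: "admissible c F f"
begin

lemma admissible_continuous: "continuous_on nodes c"
  and admissible_finite: "finite F" "F \<subseteq> E"
  and admissible_smooth: "e \<in> E \<Longrightarrow> smooth_on (f e) {0<..<len e}"
  and admissible_const: "e \<in> E - F \<Longrightarrow> f e t = c (vpt (fst (ends e)))"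
  using admissible unfolding admissible_def by blast+

lemma admissible_ends:
  obtains a b where "\<And>e. e \<in> E \<Longrightarrow> 0 < a e \<and> b e < len e \<and>
    (\<forall>t\<le>a e. f e t = c (vpt (fst (ends e)))) \<and> (\<forall>t\<ge>b e. f e t = c (vpt (snd (ends e))))"
  using admissible unfolding admissible_def by metis

lemma admissible_const_ends: "e \<in> E - F \<Longrightarrow> c (vpt (fst (ends e))) = c (vpt (snd (ends e)))"
  using admissible_ends admissible_const by (metis DiffD1 order_refl)

lemma graph_fun_continuous_at_ept:
  assumes e: "e \<in> E" "0 < s" "s < len e"
  shows "continuous (at (ept e s) within Gbar) (graph_fun c f)"
  unfolding continuous_within_eps_delta
proof (intro allI impI)
  fix \<epsilon> :: real assume "0 < \<epsilon>"
  have "isCont (f e) s"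
    using admissible_smooth e by (intro differentiable_imp_continuous_within smooth_on_imp_differentiable) auto
  then obtain d where d: "0 < d" "\<And>t. dist t s < d \<Longrightarrow> dist (f e t) (f e s) < \<epsilon>"
    using \<open>0 < \<epsilon>\<close> unfolding continuous_at_eps_delta by blast
  have "dist (graph_fun c f q) (graph_fun c f (ept e s)) < \<epsilon>"
    if q: "q \<in> Gbar" "dist q (ept e s) < min d (min s (len e - s))" for q
  proof -
    obtain t where t: "0 < t" "t < len e" "q = ept e t" "dist (ept e s) q = \<bar>s - t\<bar>"
      using edge_ball_in_edge[OF e q(1)] q(2) by (auto simp: dist_commute)
    then have "dist t s < d"
      using q(2) by (simp add: dist_real_def dist_commute abs_minus_commute)
    then show ?thesis
      using d t e by (simp add: graph_fun_ept)
  qed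
  then show "\<exists>d>0. \<forall>q\<in>Gbar. dist q (ept e s) < d \<longrightarrow>
      dist (graph_fun c f q) (graph_fun c f (ept e s)) < \<epsilon>"
    using d(1) e by (intro exI[of _ "min d (min s (len e - s))"]) auto
qed

lemma admissible_locally_const_near_vertex:
  assumes v: "v \<in> V"
  obtains r where "0 < r" "\<And>e t. e \<in> E \<Longrightarrow> 0 < t \<Longrightarrow> t < len e \<Longrightarrow> gd (Vtx v) (EPt e t) < r \<Longrightarrow>
    \<forall>\<^sub>F y in nhds t. f e y = c (vpt v)"
proof -
  obtain a b where ab: "\<And>e. e \<in> E \<Longrightarrow> 0 < a e \<and> b e < len e \<and>
    (\<forall>t\<le>a e. f e t = c (vpt (fst (ends e)))) \<and> (\<forall>t\<ge>b e. f e t = c (vpt (snd (ends e))))"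
    using admissible_ends by blast
  define m where "m = Min (insert (vradius v) ((\<lambda>e. min (a e) (len e - b e)) ` F))"
  have m_le: "m \<le> x" if "x \<in> insert (vradius v) ((\<lambda>e. min (a e) (len e - b e)) ` F)" for x
    unfolding m_def using admissible_finite(1) that by (intro Min_le) auto
  have m_pos: "0 < m"
    unfolding m_def using admissible_finite ab vradius_pos[OF v] by (auto simp: Min_gr_iff)
  have m_le_vradius: "m \<le> vradius v"
    by (rule m_le) simp
  have m_le_ends: "m \<le> a e \<and> m \<le> len e - b e" if "e \<in> F" for e
    using m_le[of "min (a e) (len e - b e)"] that by auto
  have "\<forall>\<^sub>F y in nhds t. f e y = c (vpt v)"
    if e: "e \<in> E" "0 < t" "t < len e" and near: "gd (Vtx v) (EPt e t) < m" for e t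
  proof (cases "e \<in> F")
    case False
    then show ?thesis
      using gd_near_Vtx[OF v EPt_in_pts[OF e]] near m_le_vradius e admissible_const admissible_const_ends
      by auto
  next
    case True
    note ab_e = ab[OF e(1)]
    consider "fst (ends e) = v" "t < a e" | "snd (ends e) = v" "b e < t"
      using gd_near_Vtx[OF v EPt_in_pts[OF e]] near m_le_vradius m_le_ends[OF True] by fastforce
    then show ?thesis
    proof cases
      case 1
      then have "\<forall>\<^sub>F y in nhds t. y \<in> {..<a e}"
        by (intro eventually_nhds_in_open) auto
      then show ?thesis
        using 1 ab_e by (auto elim!: eventually_mono)
    next
      case 2
      then have "\<forall>\<^sub>F y in nhds t. y \<in> {b e<..}"
        by (intro eventually_nhds_in_open) auto
      then show ?thesis
        using 2 ab_e by (auto elim!: eventually_mono)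
    qed
  qed
  then show ?thesis
    using that m_pos by blast
qed

lemma graph_fun_const_near_vertex:
  assumes v: "v \<in> V"
  obtains r where "0 < r" "\<And>q. q \<in> Gbar \<Longrightarrow> dist (vpt v) q < r \<Longrightarrow> graph_fun c f q = graph_fun c f (vpt v)"
proof -
  obtain r where r: "0 < r" "\<And>e t. e \<in> E \<Longrightarrow> 0 < t \<Longrightarrow> t < len e \<Longrightarrow> gd (Vtx v) (EPt e t) < r \<Longrightarrow>
    \<forall>\<^sub>F y in nhds t. f e y = c (vpt v)"
    using admissible_locally_const_near_vertex[OF v] by blast
  have at_v: "graph_fun c f (vpt v) = c (vpt v)"
    using vpt_in_nodes[OF v] unfolding nodes_def by (simp add: graph_fun_nodes)
  have "graph_fun c f q = c (vpt v)" if q: "q \<in> Gbar" "dist (vpt v) q < min r (vradius v)" for q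
  proof -
    obtain x where x: "x \<in> pts" "q = iota x"
      using vertex_ball_in_pts[OF v q(1)] q(2) by auto
    have near: "gd (Vtx v) x < min r (vradius v)"
      using q x dist_iota[OF Vtx_in_pts[OF v] x(1)] by simp
    show ?thesis
    proof (rule gpointsE[OF x(1)])
      fix w assume "x = Vtx w" "w \<in> V"
      then show ?thesis
        using gd_near_Vtx[OF v x(1)] near x at_v by auto
    next
      fix e t assume et: "x = EPt e t" "e \<in> E" "0 < t" "t < len e"
      then have "f e t = c (vpt v)"
        using r(2) near eventually_nhds_x_imp_x by fastforce
      then show ?thesis
        using et x by (simp add: graph_fun_ept)
    qed
  qed
  then show ?thesis
    using that[of "min r (vradius v)"] r(1) vradius_pos[OF v] at_v by auto
qed

lemma graph_fun_continuous_at_ideal: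
  assumes p: "p \<in> Gbar" "p \<notin> iota ` pts"
  shows "continuous (at p within Gbar) (graph_fun c f)"
  unfolding continuous_within_eps_delta
proof (intro allI impI)
  fix \<epsilon> :: real assume "0 < \<epsilon>"
  have p_node: "p \<in> nodes"
    using p by (rule ideal_in_nodes)
  obtain dc where dc: "0 < dc" "\<And>q. q \<in> nodes \<Longrightarrow> dist q p < dc \<Longrightarrow> dist (c q) (c p) < \<epsilon>"
    using admissible_continuous p_node \<open>0 < \<epsilon>\<close> unfolding continuous_on_iff by blast
  have "\<forall>e\<in>F. \<exists>\<delta>>0. \<forall>t. 0 < t \<and> t < len e \<longrightarrow> \<delta> \<le> dist p (ept e t)"
    using ideal_point_far_from_edge[OF p] admissible_finite(2) by (metis subsetD)
  then obtain \<delta> where \<delta>: "\<And>e. e \<in> F \<Longrightarrow> 0 < \<delta> e"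
    "\<And>e t. e \<in> F \<Longrightarrow> 0 < t \<Longrightarrow> t < len e \<Longrightarrow> \<delta> e \<le> dist p (ept e t)"
    by metis
  define d where "d = Min (insert dc (\<delta> ` F))"
  have d: "0 < d" "d \<le> dc" "\<And>e. e \<in> F \<Longrightarrow> d \<le> \<delta> e"
    using admissible_finite dc \<delta> unfolding d_def by (auto simp: Min_gr_iff)
  have at_p: "graph_fun c f p = c p"
    using p_node unfolding nodes_def by (simp add: graph_fun_nodes)
  have "dist (graph_fun c f q) (graph_fun c f p) < \<epsilon>" if q: "q \<in> Gbar" "dist q p < d" for q
  proof (cases "q \<in> iota ` edge_pts")
    case False
    then show ?thesis
      using q dc d at_p by (simp add: graph_fun_nodes nodes_def)
  next
    case True
    then obtain e t where et: "e \<in> E" "0 < t" "t < len e" "q = ept e t"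
      by (rule edge_ptsE)
    have "e \<notin> F"
      using \<delta>(2)[of e t] d(3)[of e] q(2) et by (force simp: dist_commute)
    have "min (t + dist (vpt (fst (ends e))) p) (len e - t + dist (vpt (snd (ends e))) p) < d"
      using ideal_point_dist_via_ends[OF p et(1-3)] q(2) et(4) by simp
    then have "dist (vpt (fst (ends e))) p < dc \<or> dist (vpt (snd (ends e))) p < dc"
      using et(2,3) d(2) unfolding min_less_iff_disj by argo
    then obtain w where w: "w = fst (ends e) \<or> w = snd (ends e)" "dist (vpt w) p < dc"
      by blast
    then have "dist (c (vpt w)) (c p) < \<epsilon>"
      using dc(2) vpt_in_nodes fst_ends_in_V snd_ends_in_V et(1) by blast
    moreover have "graph_fun c f q = c (vpt w)"
      using w(1) et \<open>e \<notin> F\<close> admissible_const admissible_const_ends by (auto simp: graph_fun_ept)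
    ultimately show ?thesis
      using at_p by simp
  qed
  then show "\<exists>d>0. \<forall>q\<in>Gbar. dist q p < d \<longrightarrow> dist (graph_fun c f q) (graph_fun c f p) < \<epsilon>"
    using d(1) by blast
qed

lemma continuous_on_graph_fun: "continuous_on Gbar (graph_fun c f)"
proof (rule continuous_on_eq_continuous_within[THEN iffD2], intro ballI)
  fix p assume p: "p \<in> Gbar"
  show "continuous (at p within Gbar) (graph_fun c f)"
  proof (cases "p \<in> iota ` pts")
    case False
    then show ?thesis
      by (rule graph_fun_continuous_at_ideal[OF p])
  next
    case True
    then obtain x where x: "x \<in> pts" "p = iota x"
      by blast
    show ?thesis
    proof (rule gpointsE[OF x(1)])
      fix v assume v: "x = Vtx v" "v \<in> V"
      obtain r where "0 < r" "\<And>q. q \<in> Gbar \<Longrightarrow> dist (vpt v) q < r \<Longrightarrow> graph_fun c f q = graph_fun c f (vpt v)"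
        using graph_fun_const_near_vertex[OF v(2)] by blast
      then show ?thesis
        unfolding continuous_within_eps_delta using x v by (metis dist_commute dist_self)
    next
      fix e t assume "x = EPt e t" "e \<in> E" "0 < t" "t < len e"
      then show ?thesis
        using x graph_fun_continuous_at_ept by simp
    qed
  qed
qed

lemma graph_fun_in_algebraA: "graph_fun c f \<in> algebraA V E ends len iota Gbar"
proof -
  have edge_fun_eq: "edge_fun iota (graph_fun c f) e t = f e t" if "e \<in> E" "t \<in> {0<..<len e}" for e t
    using that by (simp add: edge_fun_def graph_fun_ept)
  have deriv_0: "deriv (edge_fun iota (graph_fun c f) e) t = 0"
    if "e \<in> E" "t \<in> {0<..<len e}" "\<forall>\<^sub>F y in nhds t. f e y = k" for e t k
  proof (rule deriv_eq_0_if_eventually_const)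
    have "\<forall>\<^sub>F y in nhds t. y \<in> {0<..<len e}"
      using that(2) by (intro eventually_nhds_in_open) auto
    then show "\<forall>\<^sub>F y in nhds t. edge_fun iota (graph_fun c f) e y = k"
      using that(3) by eventually_elim (simp add: edge_fun_eq that(1))
  qed
  show ?thesis
    unfolding algebraA_def
  proof (intro CollectI conjI ballI)
    show "continuous_on Gbar (graph_fun c f)"
      by (rule continuous_on_graph_fun)
  next
    fix e assume e: "e \<in> E"
    show "smooth_on (edge_fun iota (graph_fun c f) e) {0<..<len e}"
      by (rule smooth_on_cong[OF _ _ admissible_smooth[OF e]]) (simp_all add: edge_fun_eq e)
  next
    have "deriv (edge_fun iota (graph_fun c f) e) t = 0" if "e \<in> E - F" "t \<in> {0<..<len e}" for e t
      using that admissible_const by (intro deriv_0[where k = "c (vpt (fst (ends e)))"]) auto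
    then show "\<exists>F. finite F \<and> F \<subseteq> E \<and>
        (\<forall>e\<in>E - F. \<forall>t\<in>{0<..<len e}. deriv (edge_fun iota (graph_fun c f) e) t = 0)"
      using admissible_finite by blast
  next
    fix v assume v: "v \<in> V"
    obtain r where r: "0 < r" "\<And>e t. e \<in> E \<Longrightarrow> 0 < t \<Longrightarrow> t < len e \<Longrightarrow> gd (Vtx v) (EPt e t) < r \<Longrightarrow>
      \<forall>\<^sub>F y in nhds t. f e y = c (vpt v)"
      using admissible_locally_const_near_vertex[OF v] by blast
    have "deriv (edge_fun iota (graph_fun c f) e) t = 0"
      if "e \<in> E" "t \<in> {0<..<len e}" "gd (Vtx v) (EPt e t) < r" for e t
      using that r(2)[of e t] by (intro deriv_0) auto
    then show "\<exists>r>0. \<forall>e\<in>E. \<forall>t\<in>{0<..<len e}. gd (Vtx v) (EPt e t) < r \<longrightarrow>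
        deriv (edge_fun iota (graph_fun c f) e) t = 0"
      using r(1) by blast
  qed
qed

end

lemma admissible_bump:
  assumes e: "e \<in> E" and "0 < a" "b < len e"
  shows "admissible (\<lambda>_. 0) {e} (\<lambda>e'. if e' = e then bump a b else (\<lambda>_. 0))"
  unfolding admissible_def
proof (intro conjI ballI)
  show "continuous_on nodes (\<lambda>_. 0::real)" "finite {e}" "{e} \<subseteq> E"
    using e by auto
next
  fix e' assume e': "e' \<in> E"
  let ?f = "if e' = e then bump a b else (\<lambda>_. 0)"
  show "smooth_on ?f {0<..<len e'}"
    by (simp add: smooth_on_bump smooth_on_const)
  show "\<exists>a b. 0 < a \<and> b < len e' \<and> (\<forall>t\<le>a. ?f t = 0) \<and> (\<forall>t\<ge>b. ?f t = 0)"
  proof (cases "e' = e")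
    case True
    then show ?thesis
      using assms by (intro exI[of _ a] exI[of _ b]) (auto simp: bump_eq_0)
  next
    case False
    then show ?thesis
      using len_pos[OF e'] by (intro exI[of _ "len e' / 2"] exI[of _ "len e' / 2"]) auto
  qed
qed auto

lemma algebraA_separates_ept:
  assumes e: "e \<in> E" "0 < s" "s < len e" and y: "y \<in> Gbar" "y \<noteq> ept e s"
  obtains \<phi> where "\<phi> \<in> algebraA V E ends len iota Gbar" "\<phi> (ept e s) \<noteq> \<phi> y"
proof -
  define m where "m = min (min s (len e - s)) (dist y (ept e s))"
  have "0 < m" "m \<le> s" "m \<le> len e - s" "m \<le> dist y (ept e s)"
    using e y unfolding m_def by auto
  define \<delta> where "\<delta> = m / 2"
  have \<delta>: "0 < \<delta>" "0 < s - \<delta>" "s + \<delta> < len e" "\<delta> < dist y (ept e s)"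
    unfolding \<delta>_def using \<open>0 < m\<close> \<open>m \<le> s\<close> \<open>m \<le> len e - s\<close> \<open>m \<le> dist y (ept e s)\<close> by linarith+
  define f where "f = (\<lambda>e'. if e' = e then bump (s - \<delta>) (s + \<delta>) else (\<lambda>_. 0))"
  have "admissible (\<lambda>_. 0) {e} f"
    unfolding f_def using e(1) \<delta>(2,3) by (rule admissible_bump)
  then have "graph_fun (\<lambda>_. 0) f \<in> algebraA V E ends len iota Gbar"
    by (rule graph_fun_in_algebraA)
  moreover have "graph_fun (\<lambda>_. 0) f (ept e s) > 0"
    using e \<delta> by (simp add: graph_fun_ept f_def bump_pos)
  moreover have "graph_fun (\<lambda>_. 0) f y = 0"
  proof (cases "y \<in> iota ` edge_pts")
    case True
    then obtain e' t where et: "e' \<in> E" "0 < t" "t < len e'" "y = ept e' t"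
      by (rule edge_ptsE)
    show ?thesis
    proof (cases "e' = e")
      case True
      have "\<delta> < \<bar>s - t\<bar>"
        using \<delta>(4) et True e gd_same_edge_le[of e s t] dist_iota[of "EPt e s" "EPt e t"]
        by (simp add: EPt_in_pts dist_commute)
      then have "t \<le> s - \<delta> \<or> s + \<delta> \<le> t"
        by (cases "s \<le> t") auto
      then show ?thesis
        using et True by (simp add: graph_fun_ept f_def bump_eq_0)
    next
      case False
      then show ?thesis
        using et by (simp add: graph_fun_ept f_def)
    qed
  next
    case False
    then show ?thesis
      by (simp add: graph_fun_nodes)
  qed
  ultimately show ?thesis
    using that by fastforce
qed

lemma algebraA_extends_node_function:
  assumes c: "continuous_on nodes c"
    and finite: "finite {e\<in>E. c (vpt (fst (ends e))) \<noteq> c (vpt (snd (ends e)))}"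
  obtains \<phi> where "\<phi> \<in> algebraA V E ends len iota Gbar" "\<And>p. p \<in> nodes \<Longrightarrow> \<phi> p = c p"
proof -
  define F where "F = {e\<in>E. c (vpt (fst (ends e))) \<noteq> c (vpt (snd (ends e)))}"
  define f where "f e t = c (vpt (fst (ends e))) +
    (c (vpt (snd (ends e))) - c (vpt (fst (ends e)))) * smooth_step (len e / 3) (2 * len e / 3) t" for e t
  have "admissible c F f"
    unfolding admissible_def
  proof (intro conjI ballI)
    show "continuous_on nodes c" "finite F" "F \<subseteq> E"
      using c finite unfolding F_def by auto
  next
    fix e assume e: "e \<in> E"
    then show "smooth_on (f e) {0<..<len e}"
      using len_pos[OF e] unfolding f_def
      by (intro smooth_on_add smooth_on_mult smooth_on_const smooth_on_smooth_step) auto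
    show "\<exists>a b. 0 < a \<and> b < len e \<and> (\<forall>t\<le>a. f e t = c (vpt (fst (ends e)))) \<and>
        (\<forall>t\<ge>b. f e t = c (vpt (snd (ends e))))"
      using len_pos[OF e]
      by (intro exI[of _ "len e / 3"] exI[of _ "2 * len e / 3"])
        (auto simp: f_def smooth_step_eq_0 smooth_step_eq_1)
  next
    fix e assume "e \<in> E - F"
    then show "\<forall>t. f e t = c (vpt (fst (ends e)))"
      by (simp add: F_def f_def)
  qed
  then have "graph_fun c f \<in> algebraA V E ends len iota Gbar"
    by (rule graph_fun_in_algebraA)
  moreover have "graph_fun c f p = c p" if "p \<in> nodes" for p
    using that by (simp add: nodes_def graph_fun_nodes)
  ultimately show ?thesis
    using that by blast
qed

text \<open>Split two nodes by a partition of \<open>nodes\<close> into closed sets \<open>U\<close>, \<open>W\<close>.  An edge whose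
  end vertices lie on different sides is at least as long as the distance from \<open>U\<close> to \<open>W\<close>,
  so the indicator of \<open>U\<close> extends into \<open>algebraA\<close>.\<close>

lemma algebraA_separates_nodes:
  assumes td: "totally_disconnected nodes" and xy: "x \<in> nodes" "y \<in> nodes" "x \<noteq> y"
  obtains \<phi> where "\<phi> \<in> algebraA V E ends len iota Gbar" "\<phi> x \<noteq> \<phi> y"
proof -
  obtain U W where UW: "closed U" "closed W" "U \<union> W = nodes" "U \<inter> W = {}" "x \<in> U" "y \<in> W"
    using compact_totally_disconnected_separation[OF compact_nodes td xy] by blast
  have "U \<subseteq> nodes" "W \<subseteq> nodes"
    using UW(3) by auto
  then have "compact U" "compact W"
    using compact_Int_closed[OF compact_nodes UW(1)] compact_Int_closed[OF compact_nodes UW(2)]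
    by (simp_all add: Int_absorb1)
  then obtain d where d: "0 < d" "\<And>u w. u \<in> U \<Longrightarrow> w \<in> W \<Longrightarrow> d \<le> dist u w"
    using compact_disjoint_dist_pos[OF _ _ UW(4)] by blast
  define c where "c p = (if p \<in> U then 1 else 0 :: real)" for p
  have "continuous_on (U \<union> W) c"
  proof (rule continuous_on_closed_Un[OF UW(1,2)])
    show "continuous_on U c"
      by (rule continuous_on_eq[OF continuous_on_const[of U 1]]) (simp add: c_def)
    show "continuous_on W c"
      using UW(4) by (intro continuous_on_eq[OF continuous_on_const[of W 0]]) (auto simp: c_def)
  qed
  then have cont: "continuous_on nodes c"
    using UW(3) by simp
  have "{e\<in>E. c (vpt (fst (ends e))) \<noteq> c (vpt (snd (ends e)))} \<subseteq> {e\<in>E. d \<le> len e}"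
  proof
    fix e assume "e \<in> {e\<in>E. c (vpt (fst (ends e))) \<noteq> c (vpt (snd (ends e)))}"
    then have e: "e \<in> E" and differ: "c (vpt (fst (ends e))) \<noteq> c (vpt (snd (ends e)))"
      by auto
    have "vpt (fst (ends e)) \<in> nodes" "vpt (snd (ends e)) \<in> nodes"
      using e by (auto intro!: vpt_in_nodes fst_ends_in_V snd_ends_in_V)
    then have "vpt (fst (ends e)) \<in> U \<and> vpt (snd (ends e)) \<in> W \<or>
        vpt (snd (ends e)) \<in> U \<and> vpt (fst (ends e)) \<in> W"
      using differ UW(3) unfolding c_def by (auto split: if_splits)
    then have "d \<le> dist (vpt (fst (ends e))) (vpt (snd (ends e)))"
      using d(2)[of "vpt (fst (ends e))" "vpt (snd (ends e))"] d(2)[of "vpt (snd (ends e))" "vpt (fst (ends e))"]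
      by (auto simp: dist_commute)
    also have "\<dots> \<le> len e"
      using e vd_edge_le[OF e] dist_iota[OF Vtx_in_pts Vtx_in_pts] by (simp add: fst_ends_in_V snd_ends_in_V)
    finally show "e \<in> {e\<in>E. d \<le> len e}"
      using e by blast
  qed
  then have "finite {e\<in>E. c (vpt (fst (ends e))) \<noteq> c (vpt (snd (ends e)))}"
    using finite_long_edges[OF d(1)] by (rule finite_subset)
  then obtain \<phi> where "\<phi> \<in> algebraA V E ends len iota Gbar" "\<And>p. p \<in> nodes \<Longrightarrow> \<phi> p = c p"
    using algebraA_extends_node_function[OF cont] by blast
  moreover have "c x \<noteq> c y"
    using UW(4-6) by (auto simp: c_def)
  ultimately show ?thesis
    using that xy by metis
qed

lemma algebraA_separates_points:
  assumes td: "totally_disconnected (gboundary V E len B iota Gbar)"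
    and xy: "x \<in> Gbar" "y \<in> Gbar" "x \<noteq> y"
  shows "\<exists>\<phi>\<in>algebraA V E ends len iota Gbar. \<phi> x \<noteq> \<phi> y"
proof (cases "x \<in> iota ` edge_pts \<or> y \<in> iota ` edge_pts")
  case True
  then show ?thesis
    using xy by (elim disjE edge_ptsE) (metis algebraA_separates_ept)+
next
  case False
  then have "x \<in> nodes" "y \<in> nodes"
    using xy unfolding nodes_def by blast+
  then show ?thesis
    using algebraA_separates_nodes[OF totally_disconnected_nodes[OF td]] xy(3) by metis
qed

lemma algebraA_uniformly_dense:
  assumes td: "totally_disconnected (gboundary V E len B iota Gbar)"
    and f: "continuous_on Gbar f" and \<epsilon>: "0 < \<epsilon>"
  shows "\<exists>\<phi>\<in>algebraA V E ends len iota Gbar. \<forall>x\<in>Gbar. \<bar>f x - \<phi> x\<bar> < \<epsilon>"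
proof -
  let ?A = "algebraA V E ends len iota Gbar"
  have "\<exists>\<phi>. \<phi> \<in> ?A \<and> (\<forall>x\<in>Gbar. \<bar>f x - \<phi> x\<bar> < \<epsilon>)"
  proof (rule Stone_Weierstrass_HOL[OF compact_Gbar _ _ _ _ _ f \<epsilon>])
    show "(\<lambda>x. k) \<in> ?A" for k
      by (rule algebraA_const)
    show "continuous_on Gbar \<phi>" if "\<phi> \<in> ?A" for \<phi>
      using that by (simp add: algebraA_def)
    show "(\<lambda>x. \<phi> x + \<psi> x) \<in> ?A" "(\<lambda>x. \<phi> x * \<psi> x) \<in> ?A" if "\<phi> \<in> ?A \<and> \<psi> \<in> ?A" for \<phi> \<psi>
      using that algebraA_add algebraA_mult by blast+
    show "\<exists>\<phi>. \<phi> \<in> ?A \<and> \<phi> x \<noteq> \<phi> y" if "x \<in> Gbar \<and> y \<in> Gbar \<and> x \<noteq> y" for x y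
      using algebraA_separates_points[OF td] that by blast
  qed
  then show ?thesis
    by blast
qed

lemma algebraA_uniformly_dense_on_gboundary:
  assumes td: "totally_disconnected (gboundary V E len B iota Gbar)"
    and g: "continuous_on (gboundary V E len B iota Gbar) g" and \<epsilon>: "0 < \<epsilon>"
  shows "\<exists>\<phi>\<in>algebraA V E ends len iota Gbar. \<forall>x\<in>gboundary V E len B iota Gbar. \<bar>g x - \<phi> x\<bar> < \<epsilon>"
proof -
  have "gboundary V E len B iota Gbar \<subseteq> Gbar"
    unfolding gboundary_def by blast
  moreover obtain f where "continuous_on Gbar f" "\<And>x. x \<in> gboundary V E len B iota Gbar \<Longrightarrow> f x = g x"
    using Tietze_real[OF closed_gboundary calculation g] by blast
  ultimately show ?thesis
    using algebraA_uniformly_dense[OF td _ \<epsilon>] by (metis subsetD)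
qed

end

theorem theorem2p7:
  fixes V :: "'v set" and E :: "'e set" and ends :: "'e \<Rightarrow> 'v \<times> 'v" and len :: "'e \<Rightarrow> real"
    and B :: "'v set" and iota :: "('v, 'e) gpoint \<Rightarrow> 'p::metric_space" and Gbar :: "'p set"
  assumes "metric_graph V E ends len"
    and "B \<subseteq> V" and "\<forall>v\<in>V. degree E ends v = 1 \<longrightarrow> v \<in> B"
    and "is_completion V E ends len iota Gbar"
    and "compact Gbar"
    and "totally_disconnected (gboundary V E len B iota Gbar)"
  shows "(\<forall>f. continuous_on Gbar f \<longrightarrow> (\<forall>\<epsilon>>0. \<exists>phi\<in>algebraA V E ends len iota Gbar.
            \<forall>x\<in>Gbar. \<bar>f x - phi x\<bar> < \<epsilon>)) \<and>
         (\<forall>g. continuous_on (gboundary V E len B iota Gbar) g \<longrightarrow> (\<forall>\<epsilon>>0.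
            \<exists>phi\<in>algebraA V E ends len iota Gbar.
            \<forall>x\<in>gboundary V E len B iota Gbar. \<bar>g x - phi x\<bar> < \<epsilon>))"
proof -
  interpret mgraph_completion V E ends len iota Gbar
    using assms(1,4,5) by unfold_locales
  show ?thesis
    using algebraA_uniformly_dense[OF assms(6)] algebraA_uniformly_dense_on_gboundary[OF assms(6)]
    by blast
qed

end
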